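(* Let $n\ge2$, $m\ge2$, $0<r<n$ be integers, $C>0$, $T$ a positive integer with $\frac{1}{2nrCT^2}<1$ and $\sqrt{2\log(2nrCT^3(T+1))}\ge C$. Suppose $\mathbf{E}\in[0,C]^n$ is unknown to player 1, and the reward vectors $\mathbf{W}[1],\dots,\mathbf{W}[T]\in\mathbb{R}^n$ are i.i.d. with $W_k[t]=E_k+\eta_k[t]$, where each $\eta_k[t]$ is zero-mean and 1-sub-Gaussian (components within a time slot may be dependent). Set $\delta=\frac{1}{2nrCT^2}$, $L=\log\frac{T(T+1)}{\delta}=\log(2nrCT^3(T+1))$, $D=C+2\sqrt{2L}$, $\beta=\frac{1}{D\sqrt{T}}$. Player 1 runs the following UCB procedure: $\mathbf{p}[1]=(r/n,\dots,r/n)$; for $t=1,\dots,T$: with $n_k[t]=\sum_{\tau<t}\alpha_k[\tau]$, $\bar E_k[t]=\frac{1}{\max(1,n_k[t])}\sum_{\tau<t}\alpha_k[\tau]W_k[\tau]$, $\tilde E_k[t]=\bar E_k[t]+\sqrt{\frac{2L}{\max(1,n_k[t])}}$ and $f_t(\mathbf{p},\mathbf{x})=\sum_{k}\frac{\tilde E_k[t]p_k}{1+x_k}$, choose $\mathbf{x}[t]\in\arg\min_{\mathbf{x}\in\mathcal{J}_{m-1}}f_t(\mathbf{p}[t],\mathbf{x})$; draw a random action $\alpha[t]\in\mathcal{J}_1$ with $\mathbb{P}(\alpha_k[t]=1\mid\mathcal{H}[t])=p_k[t]$ for all $k$, and observe $W_k[t]$ for exactly those $k$ with $\alpha_k[t]=1$;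 set $\mathbf{p}[t+1]=\Pi_{\mathcal{I}}\big(\mathbf{p}[t]+\beta\nabla_{\mathbf{p}}f_t(\mathbf{p}[t],\mathbf{x}[t])\big)$ with $(\nabla_{\mathbf{p}}f_t(\mathbf{p},\mathbf{x}))_k=\tilde E_k[t]/(1+x_k)$. Then the worst-case regret satisfies $$R(T):=\sum_{t=1}^T\Big(f^{\mathrm{maximin}}-\mathbb{E}\{f^{\mathrm{worst}}(\mathbf{p}[t])\}\Big)\le nD\sqrt{T}+4n\sqrt{2rT\log(2nrCT^3(T+1))}+1.$$
   Context: $\mathcal{J}_q=\{\mathbf{x}\in\{0,\dots,q\}^n:\sum_jx_j=qr\}$; $\mathcal{I}=\{\mathbf{p}\in[0,1]^n:\sum_kp_k=r\}$; $\Pi_{\mathcal{I}}$ is Euclidean projection onto $\mathcal{I}$; $f(\mathbf{p},\mathbf{x})=\sum_k\frac{E_kp_k}{1+x_k}$; $f^{\mathrm{worst}}(\mathbf{p})=\min_{\mathbf{x}\in\mathcal{J}_{m-1}}f(\mathbf{p},\mathbf{x})$; $f^{\mathrm{maximin}}=\max_{\mathbf{p}\in\mathcal{I}}f^{\mathrm{worst}}(\mathbf{p})$. $\mathcal{H}[t]$ is the history of player 1 before slot $t$: its past actions $\alpha[\tau]$ and observed rewards $\{W_k[\tau]:\alpha_k[\tau]=1\}$, $\tau<t$; the action $\alpha[t]$ is drawn using only $\mathcal{H}[t]$ and independent randomness, and $\mathbf{W}[t]$ is independent of $\mathcal{H}[t]$ and $\alpha[t]$. The expectation is over rewards and player 1's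 randomization; $\log$ is the natural logarithm. *)

theory Defs
  imports "HOL-Probability.Probability"
begin

text \<open>Vectors in R^n are modelled as real^'n with n = CARD('n).\<close>

definition Jset :: "nat \<Rightarrow> nat \<Rightarrow> (real^'n) set" where
  "Jset q r = {x. (\<forall>k. \<exists>j::nat. j \<le> q \<and> x $ k = real j) \<and> (\<Sum>k\<in>UNIV. x $ k) = real q * real r}"

definition Iset :: "nat \<Rightarrow> (real^'n) set" where
  "Iset r = {p. (\<forall>k. 0 \<le> p $ k \<and> p $ k \<le> 1) \<and> (\<Sum>k\<in>UNIV. p $ k) = real r}"

definition projI :: "nat \<Rightarrow> real^'n \<Rightarrow> real^'n" where
  "projI r v = closest_point (Iset r) v"

definition fval :: "real^'n \<Rightarrow> real^'n \<Rightarrow> real^'n \<Rightarrow> real" where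
  "fval E p x = (\<Sum>k\<in>UNIV. E $ k * p $ k / (1 + x $ k))"

definition fworst :: "nat \<Rightarrow> nat \<Rightarrow> real^'n \<Rightarrow> real^'n \<Rightarrow> real" where
  "fworst m r E p = Min ((\<lambda>x. fval E p x) ` Jset (m - 1) r)"

definition fmaximin :: "nat \<Rightarrow> nat \<Rightarrow> real^'n \<Rightarrow> real" where
  "fmaximin m r E = (SUP p\<in>Iset r. fworst m r E p)"

text \<open>Observed rewards of slot tau (unobserved components masked by 0).\<close>
definition obs :: "(nat \<Rightarrow> 'a \<Rightarrow> real^'n) \<Rightarrow> (nat \<Rightarrow> 'a \<Rightarrow> real^'n) \<Rightarrow> nat \<Rightarrow> 'a \<Rightarrow> real^'n" where
  "obs \<alpha> W \<tau> \<omega> = (\<chi> k. if \<alpha> \<tau> \<omega> $ k = 1 then W \<tau> \<omega> $ k else 0)"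

text \<open>Generators of the sigma-algebra of the history H[t] (slots 1..t-1).\<close>
definition Hgen :: "'a measure \<Rightarrow> (nat \<Rightarrow> 'a \<Rightarrow> real^'n) \<Rightarrow> (nat \<Rightarrow> 'a \<Rightarrow> real^'n) \<Rightarrow> nat \<Rightarrow> 'a set set" where
  "Hgen M \<alpha> W t = (\<Union>\<tau>\<in>{1..<t}. {\<alpha> \<tau> -` B \<inter> space M | B. B \<in> sets borel}
                              \<union> {obs \<alpha> W \<tau> -` B \<inter> space M | B. B \<in> sets borel})"

definition Hsig :: "'a measure \<Rightarrow> (nat \<Rightarrow> 'a \<Rightarrow> real^'n) \<Rightarrow> (nat \<Rightarrow> 'a \<Rightarrow> real^'n) \<Rightarrow> nat \<Rightarrow> 'a measure" where
  "Hsig M \<alpha> W t = sigma (space M) (Hgen M \<alpha> W t)"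

definition HAsig :: "'a measure \<Rightarrow> (nat \<Rightarrow> 'a \<Rightarrow> real^'n) \<Rightarrow> (nat \<Rightarrow> 'a \<Rightarrow> real^'n) \<Rightarrow> nat \<Rightarrow> 'a set set" where
  "HAsig M \<alpha> W t = sigma_sets (space M) (Hgen M \<alpha> W t \<union> {\<alpha> t -` B \<inter> space M | B. B \<in> sets borel})"

definition ncount :: "(nat \<Rightarrow> 'a \<Rightarrow> real^'n) \<Rightarrow> nat \<Rightarrow> 'a \<Rightarrow> 'n \<Rightarrow> real" where
  "ncount \<alpha> t \<omega> k = (\<Sum>\<tau>\<in>{1..<t}. \<alpha> \<tau> \<omega> $ k)"

definition Ebar :: "(nat \<Rightarrow> 'a \<Rightarrow> real^'n) \<Rightarrow> (nat \<Rightarrow> 'a \<Rightarrow> real^'n) \<Rightarrow> nat \<Rightarrow> 'a \<Rightarrow> real^'n" where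
  "Ebar \<alpha> W t \<omega> = (\<chi> k. (\<Sum>\<tau>\<in>{1..<t}. \<alpha> \<tau> \<omega> $ k * W \<tau> \<omega> $ k) / max 1 (ncount \<alpha> t \<omega> k))"

definition Etil :: "real \<Rightarrow> (nat \<Rightarrow> 'a \<Rightarrow> real^'n) \<Rightarrow> (nat \<Rightarrow> 'a \<Rightarrow> real^'n) \<Rightarrow> nat \<Rightarrow> 'a \<Rightarrow> real^'n" where
  "Etil L \<alpha> W t \<omega> = (\<chi> k. Ebar \<alpha> W t \<omega> $ k + sqrt (2 * L / max 1 (ncount \<alpha> t \<omega> k)))"

text \<open>ucb_q s = p[s+1]; x t \<omega> is the chosen minimiser x[t].\<close>
primrec ucb_q :: "nat \<Rightarrow> real \<Rightarrow> real \<Rightarrow> (nat \<Rightarrow> 'a \<Rightarrow> real^'n) \<Rightarrow> (nat \<Rightarrow> 'a \<Rightarrow> real^'n)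
                  \<Rightarrow> (nat \<Rightarrow> 'a \<Rightarrow> real^'n) \<Rightarrow> nat \<Rightarrow> 'a \<Rightarrow> real^'n" where
  "ucb_q r L \<beta> x \<alpha> W 0 \<omega> = (\<chi> k. real r / real CARD('n))"
| "ucb_q r L \<beta> x \<alpha> W (Suc s) \<omega> =
     projI r (ucb_q r L \<beta> x \<alpha> W s \<omega>
              + \<beta> *\<^sub>R (\<chi> k. Etil L \<alpha> W (Suc s) \<omega> $ k / (1 + x (Suc s) \<omega> $ k)))"

definition ucb_p :: "nat \<Rightarrow> real \<Rightarrow> real \<Rightarrow> (nat \<Rightarrow> 'a \<Rightarrow> real^'n) \<Rightarrow> (nat \<Rightarrow> 'a \<Rightarrow> real^'n)
                  \<Rightarrow> (nat \<Rightarrow> 'a \<Rightarrow> real^'n) \<Rightarrow> nat \<Rightarrow> 'a \<Rightarrow> real^'n" where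
  "ucb_p r L \<beta> x \<alpha> W t = ucb_q r L \<beta> x \<alpha> W (t - 1)"

end

theory Submission
  imports Defs
begin

text \<open>On the good event, where every empirical mean lies within \<open>sqrt (2 L / n_k)\<close> of \<open>E_k\<close>, the
  indices \<open>Etil_k[t]\<close> are optimistic, so \<open>fworst q \<le> f_t (q, x[t])\<close> and the regret of slot \<open>t\<close>
  against \<open>q\<close> splits into the linear term \<open>\<nabla>f_t \<bullet> (q - p[t])\<close> plus the confidence widths
  \<open>\<Sum>_k 2 sqrt (2 L / n_k[t]) p_k[t]\<close>. The linear terms sum to \<open>O(n D sqrt T)\<close> by the regret bound
  of projected gradient ascent. Since \<open>n_k[t]\<close> is determined by the history, \<open>p_k[t]\<close> may be
  replaced by the action \<open>\<alpha>_k[t]\<close> in expectation; then the widths of arm \<open>k\<close> telescope to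
  \<open>O(sqrt N_k)\<close> with \<open>\<Sum>_k N_k = r T\<close>, and Cauchy-Schwarz gives \<open>4 n sqrt (2 r T L)\<close>. An
  exponential supermartingale bound on each count and a union bound show that the bad event
  costs at most \<open>1\<close>.\<close>

lemma closed_Iset: "closed (Iset r :: (real^'n) set)"
  unfolding Iset_def
  by (intro closed_Collect_conj closed_Collect_all closed_Collect_le closed_Collect_eq continuous_intros)

lemma Iset_bounds:
  assumes "p \<in> Iset r"
  shows "0 \<le> p $ k" "p $ k \<le> 1" "(\<Sum>k\<in>UNIV. p $ k) = real r"
  using assms by (auto simp: Iset_def)

lemma convex_Iset: "convex (Iset r :: (real^'n) set)"
proof (rule convexI)
  fix p q :: "real^'n" and u v :: real
  assume p: "p \<in> Iset r" and q: "q \<in> Iset r" and u: "0 \<le> u" and v: "0 \<le> v" and uv: "u + v = 1"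
  have "0 \<le> u * p $ k + v * q $ k \<and> u * p $ k + v * q $ k \<le> 1" for k
  proof -
    have "u * p $ k \<le> u" "v * q $ k \<le> v"
      using u v Iset_bounds(2)[OF p] Iset_bounds(2)[OF q] by (simp_all add: mult_left_le)
    then show ?thesis using u v uv Iset_bounds(1)[OF p] Iset_bounds(1)[OF q] by simp
  qed
  moreover have "(\<Sum>k\<in>UNIV. u * p $ k + v * q $ k) = (u + v) * real r"
    using Iset_bounds(3)[OF p] Iset_bounds(3)[OF q]
    by (simp add: sum.distrib sum_distrib_left[symmetric] algebra_simps)
  ultimately show "u *\<^sub>R p + v *\<^sub>R q \<in> Iset r" using uv by (auto simp: Iset_def)
qed

lemma uniform_in_Iset:
  assumes "r \<le> CARD('n)"
  shows "((\<chi> k. real r / real CARD('n)) :: real^'n) \<in> Iset r"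
  using assms by (auto simp: Iset_def divide_le_eq_1)

lemma finite_Jset: "finite (Jset q r :: (real^'n) set)"
proof (rule finite_subset)
  show "Jset q r \<subseteq> (vec_lambda ` (UNIV \<rightarrow>\<^sub>E real ` {0..q}) :: (real^'n) set)"
  proof
    fix x :: "real^'n" assume x: "x \<in> Jset q r"
    have "(\<lambda>k. x $ k) \<in> UNIV \<rightarrow>\<^sub>E real ` {0..q}"
    proof (intro PiE_I)
      fix k
      obtain j where "j \<le> q" "x $ k = real j" using x by (auto simp: Jset_def)
      then show "x $ k \<in> real ` {0..q}" by auto
    qed auto
    then show "x \<in> vec_lambda ` (UNIV \<rightarrow>\<^sub>E real ` {0..q})"
      by (metis image_eqI vec_lambda_eta)
  qed
  show "finite (vec_lambda ` (UNIV \<rightarrow>\<^sub>E real ` {0..q}) :: (real^'n) set)"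
    by (intro finite_imageI finite_PiE) auto
qed

lemma Jset_nonneg: "x \<in> Jset q r \<Longrightarrow> 0 \<le> x $ k"
proof -
  assume "x \<in> Jset q r"
  then obtain j :: nat where "x $ k = real j" by (auto simp: Jset_def)
  then show ?thesis by simp
qed

lemma Jset_1_cases: "x \<in> Jset 1 r \<Longrightarrow> x $ k = 0 \<or> x $ k = 1"
  by (auto simp: Jset_def le_Suc_eq)

lemma sum_Jset: "x \<in> Jset q r \<Longrightarrow> (\<Sum>k\<in>UNIV. x $ k) = real q * real r"
  by (auto simp: Jset_def)

lemma divide_one_plus_le: "0 \<le> (a::real) \<Longrightarrow> 0 \<le> y \<Longrightarrow> a / (1 + y) \<le> a"
  by (simp add: divide_le_eq algebra_simps)

lemma fval_diff_eq_inner: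
  "fval e q x - fval e p x = ((\<chi> k. e $ k / (1 + x $ k)) :: real^'n) \<bullet> (q - p)"
  unfolding fval_def inner_vec_def
  by (simp add: sum_subtractf[symmetric] algebra_simps diff_divide_distrib)

lemma fval_mono_weights:
  fixes E e q x :: "real^'n"
  assumes "\<And>k. E $ k \<le> e $ k" "\<And>k. 0 \<le> q $ k" "\<And>k. 0 \<le> x $ k"
  shows "fval E q x \<le> fval e q x"
  unfolding fval_def
proof (rule sum_mono)
  fix k
  have "E $ k * q $ k \<le> e $ k * q $ k" using assms by (simp add: mult_right_mono)
  then show "E $ k * q $ k / (1 + x $ k) \<le> e $ k * q $ k / (1 + x $ k)"
    using assms(3)[of k] by (simp add: divide_right_mono)
qed

lemma fval_diff_le:
  fixes E e p x c :: "real^'n"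
  assumes "\<And>k. E $ k \<le> e $ k" "\<And>k. e $ k - E $ k \<le> c $ k" "\<And>k. 0 \<le> p $ k" "\<And>k. 0 \<le> x $ k"
  shows "fval e p x - fval E p x \<le> (\<Sum>k\<in>UNIV. c $ k * p $ k)"
  unfolding fval_def sum_subtractf[symmetric]
proof (rule sum_mono)
  fix k
  have "e $ k * p $ k / (1 + x $ k) - E $ k * p $ k / (1 + x $ k) = (e $ k - E $ k) * p $ k / (1 + x $ k)"
    by (simp add: algebra_simps diff_divide_distrib)
  also have "\<dots> \<le> (e $ k - E $ k) * p $ k"
    using assms(1,3,4)[of k] by (intro divide_one_plus_le) auto
  also have "\<dots> \<le> c $ k * p $ k" using assms(2,3)[of k] by (simp add: mult_right_mono)
  finally show "e $ k * p $ k / (1 + x $ k) - E $ k * p $ k / (1 + x $ k) \<le> c $ k * p $ k" .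
qed

lemma fval_nonneg:
  fixes E p y :: "real^'n"
  assumes "\<And>k. 0 \<le> E $ k" "\<And>k. 0 \<le> p $ k" "\<And>k. 0 \<le> y $ k"
  shows "0 \<le> fval E p y"
  unfolding fval_def using assms by (intro sum_nonneg divide_nonneg_nonneg mult_nonneg_nonneg) auto

lemma fval_le:
  fixes E p y :: "real^'n"
  assumes "\<And>k. 0 \<le> E $ k \<and> E $ k \<le> C" "p \<in> Iset r" "\<And>k. 0 \<le> y $ k"
  shows "fval E p y \<le> C * real r"
proof -
  have "fval E p y \<le> (\<Sum>k\<in>UNIV. C * p $ k)"
    unfolding fval_def
  proof (rule sum_mono)
    fix k
    have p: "0 \<le> p $ k" using Iset_bounds(1)[OF assms(2)] .
    have "E $ k * p $ k / (1 + y $ k) \<le> E $ k * p $ k"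
      using assms(1,3)[of k] p by (intro divide_one_plus_le) auto
    also have "\<dots> \<le> C * p $ k" using assms(1)[of k] p by (simp add: mult_right_mono)
    finally show "E $ k * p $ k / (1 + y $ k) \<le> C * p $ k" .
  qed
  also have "\<dots> = C * real r"
    using Iset_bounds(3)[OF assms(2)] by (simp add: sum_distrib_left[symmetric])
  finally show ?thesis .
qed

lemma fworst_le:
  "y \<in> Jset (m - 1) r \<Longrightarrow> fworst m r E p \<le> fval E p y"
  unfolding fworst_def using finite_Jset by (intro Min_le) auto

lemma fworst_attained:
  assumes "Jset (m - 1) r \<noteq> ({} :: (real^'n) set)"
  obtains y where "y \<in> Jset (m - 1) r" "fworst m r E (p :: real^'n) = fval E p y"
proof -
  have "fworst m r E p \<in> (\<lambda>x. fval E p x) ` Jset (m - 1) r"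
    unfolding fworst_def using assms finite_Jset by (intro Min_in) auto
  then show ?thesis using that by auto
qed

lemma power2_norm_vec: "(norm (v :: real^'n))\<^sup>2 = (\<Sum>k\<in>UNIV. (v $ k)\<^sup>2)"
  unfolding power2_norm_eq_inner inner_vec_def by (simp add: power2_eq_square)

lemma dist_uniform_Iset_le:
  assumes q: "q \<in> Iset r"
  shows "(norm (((\<chi> k. real r / real CARD('n)) :: real^'n) - q))\<^sup>2 \<le> real CARD('n) / 4"
proof -
  define n where "n = real CARD('n)"
  define a where "a = real r / n"
  have n0: "0 < n" by (simp add: n_def)
  have qs: "(\<Sum>k\<in>UNIV. q $ k) = real r" using Iset_bounds(3)[OF q] .
  have "(norm (((\<chi> k. real r / real CARD('n)) :: real^'n) - q))\<^sup>2 = (\<Sum>k\<in>UNIV. (a - q $ k)\<^sup>2)"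
    unfolding power2_norm_vec by (simp add: a_def n_def)
  also have "\<dots> = (\<Sum>k\<in>UNIV. a\<^sup>2 - 2 * a * q $ k + (q $ k)\<^sup>2)"
    by (simp add: power2_diff algebra_simps)
  also have "\<dots> = n * a\<^sup>2 - 2 * a * real r + (\<Sum>k\<in>UNIV. (q $ k)\<^sup>2)"
    by (simp add: sum.distrib sum_subtractf sum_distrib_left[symmetric] qs n_def)
  also have "\<dots> \<le> n * a\<^sup>2 - 2 * a * real r + real r"
  proof -
    have "(\<Sum>k\<in>UNIV. (q $ k)\<^sup>2) \<le> (\<Sum>k\<in>UNIV. q $ k)"
      using Iset_bounds(1,2)[OF q] by (intro sum_mono) (simp add: power2_eq_square mult_left_le)
    then show ?thesis using qs by simp
  qed
  also have "\<dots> = real r - (real r)\<^sup>2 / n" using n0 by (simp add: a_def power2_eq_square field_simps)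
  also have "\<dots> \<le> n / 4"
  proof -
    have "0 \<le> (n - 2 * real r)\<^sup>2" by simp
    then show ?thesis using n0 by (simp add: field_simps power2_eq_square algebra_simps)
  qed
  finally show ?thesis by (simp add: n_def)
qed

text \<open>Zinkevich's regret bound for projected gradient ascent.\<close>

lemma closest_point_ascent_step:
  fixes P q g :: "'a::euclidean_space"
  assumes S: "convex S" "closed S" and q: "q \<in> S"
  shows "2 * \<beta> * (g \<bullet> (q - P))
    \<le> (norm (P - q))\<^sup>2 - (norm (closest_point S (P + \<beta> *\<^sub>R g) - q))\<^sup>2 + \<beta>\<^sup>2 * (norm g)\<^sup>2"
proof -
  have "dist (closest_point S (P + \<beta> *\<^sub>R g)) (closest_point S q) \<le> dist (P + \<beta> *\<^sub>R g) q"
    using q by (intro closest_point_lipschitz S) auto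
  then have "norm (closest_point S (P + \<beta> *\<^sub>R g) - q) \<le> norm (P + \<beta> *\<^sub>R g - q)"
    using closest_point_self[OF q] by (simp add: dist_norm)
  then have "(norm (closest_point S (P + \<beta> *\<^sub>R g) - q))\<^sup>2 \<le> (norm (P + \<beta> *\<^sub>R g - q))\<^sup>2"
    by (rule power_mono) simp
  also have "(norm (P + \<beta> *\<^sub>R g - q))\<^sup>2 = (norm (P - q))\<^sup>2 - 2 * \<beta> * (g \<bullet> (q - P)) + \<beta>\<^sup>2 * (norm g)\<^sup>2"
    unfolding power2_norm_eq_inner
    by (simp add: inner_add_left inner_add_right inner_diff_left inner_diff_right inner_commute
        power2_eq_square algebra_simps)
  finally show ?thesis by simp
qed

lemma closest_point_ascent_regret:
  fixes P G :: "nat \<Rightarrow> 'a::euclidean_space"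
  assumes S: "convex S" "closed S" and q: "q \<in> S"
    and rec: "\<And>s. s < N \<Longrightarrow> P (Suc s) = closest_point S (P s + \<beta> *\<^sub>R G (Suc s))"
  shows "2 * \<beta> * (\<Sum>t=1..N. G t \<bullet> (q - P (t - 1)))
         \<le> (norm (P 0 - q))\<^sup>2 - (norm (P N - q))\<^sup>2 + \<beta>\<^sup>2 * (\<Sum>t=1..N. (norm (G t))\<^sup>2)"
  using rec
proof (induction N)
  case (Suc N)
  have "2 * \<beta> * (G (Suc N) \<bullet> (q - P N))
      \<le> (norm (P N - q))\<^sup>2 - (norm (P (Suc N) - q))\<^sup>2 + \<beta>\<^sup>2 * (norm (G (Suc N)))\<^sup>2"
    using closest_point_ascent_step[OF S q, of \<beta> "G (Suc N)" "P N"] Suc.prems[of N] by simp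
  then show ?case using Suc by (simp add: distrib_left algebra_simps)
qed simp

subsection \<open>Sums of confidence widths\<close>

text \<open>Bound on the overestimate \<open>Etil_k - E_k\<close> after \<open>v\<close> observations, for \<open>K = sqrt (2 L)\<close>;
  with no observation only \<open>0 \<le> E_k \<le> C \<le> K\<close> is known.\<close>

definition conf_width :: "real \<Rightarrow> real \<Rightarrow> real" where
  "conf_width K v = (if v = 0 then K else 2 * K / sqrt v)"

lemma sum_01_eq_card:
  assumes "finite A" "\<And>t. t \<in> A \<Longrightarrow> a t = 0 \<or> a t = (1::real)"
  shows "(\<Sum>t\<in>A. a t) = real (card {t\<in>A. a t = 1})"
proof -
  have "(\<Sum>t\<in>A. a t) = (\<Sum>t\<in>A. if a t = 1 then 1 else 0)"
    using assms(2) by (intro sum.cong) auto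
  also have "\<dots> = real (card {t\<in>A. a t = 1})"
    using assms(1) by (simp add: sum.inter_filter[symmetric])
  finally show ?thesis .
qed

lemma inv_sqrt_le_diff_sqrt:
  assumes "1 \<le> (j::real)"
  shows "1 / sqrt j \<le> 2 * (sqrt j - sqrt (j - 1))"
proof -
  define s u where "s = sqrt j" and "u = sqrt (j - 1)"
  have s0: "0 < s" using assms by (simp add: s_def)
  have "2 * s * (s - u) = (s - u)\<^sup>2 + 1"
    using assms by (simp add: s_def u_def power2_eq_square algebra_simps)
  then have "1 \<le> 2 * s * (s - u)" by simp
  then have "1 / s \<le> 2 * (s - u)" using s0 by (simp add: divide_le_eq mult.commute mult.left_commute)
  then show ?thesis by (simp add: s_def u_def)
qed

text \<open>The shifted bound \<open>1 + 4 sqrt (v - 1)\<close> is what makes the induction go through.\<close>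

lemma sum_conf_width_le_aux:
  fixes a :: "nat \<Rightarrow> real"
  assumes a01: "\<And>t. t \<in> {1..N} \<Longrightarrow> a t = 0 \<or> a t = 1" and K: "0 \<le> K"
  shows "(\<Sum>t=1..N. a t * conf_width K (\<Sum>\<tau>\<in>{1..<t}. a \<tau>))
      \<le> K * (if (\<Sum>\<tau>=1..N. a \<tau>) = 0 then 0 else 1 + 4 * sqrt ((\<Sum>\<tau>=1..N. a \<tau>) - 1))"
  using a01
proof (induction N)
  case (Suc N)
  define v where "v = (\<Sum>\<tau>=1..N. a \<tau>)"
  have IH: "(\<Sum>t=1..N. a t * conf_width K (\<Sum>\<tau>\<in>{1..<t}. a \<tau>))
      \<le> K * (if v = 0 then 0 else 1 + 4 * sqrt (v - 1))"
    unfolding v_def by (rule Suc.IH) (use Suc.prems in auto)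
  obtain c :: nat where v_nat: "v = real c"
    using sum_01_eq_card[of "{1..N}" a] Suc.prems unfolding v_def by auto
  have lhs: "(\<Sum>t=1..Suc N. a t * conf_width K (\<Sum>\<tau>\<in>{1..<t}. a \<tau>))
      = (\<Sum>t=1..N. a t * conf_width K (\<Sum>\<tau>\<in>{1..<t}. a \<tau>)) + a (Suc N) * conf_width K v"
    by (simp add: v_def atLeastLessThanSuc_atLeastAtMost)
  have total: "(\<Sum>\<tau>=1..Suc N. a \<tau>) = v + a (Suc N)" by (simp add: v_def)
  consider "a (Suc N) = 0" | "a (Suc N) = 1" using Suc.prems by auto
  then show ?case
  proof cases
    case 1
    then show ?thesis using IH unfolding lhs total by (simp split: if_split_asm)
  next
    case 2
    have "K * (if v = 0 then 0 else 1 + 4 * sqrt (v - 1)) + conf_width K v \<le> K * (1 + 4 * sqrt v)"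
    proof (cases "v = 0")
      case False
      then have v1: "1 \<le> v" unfolding v_nat by (cases c) auto
      have "K * (1 / sqrt v) \<le> K * (2 * (sqrt v - sqrt (v - 1)))"
        using inv_sqrt_le_diff_sqrt[OF v1] K by (rule mult_left_mono)
      moreover have "conf_width K v = 2 * (K * (1 / sqrt v))"
        using False by (simp add: conf_width_def)
      moreover have "K * (2 * (sqrt v - sqrt (v - 1))) = 2 * (K * sqrt v) - 2 * (K * sqrt (v - 1))"
        "K * (1 + 4 * sqrt v) = K + 4 * (K * sqrt v)"
        "K * (if v = 0 then 0 else 1 + 4 * sqrt (v - 1)) = K + 4 * (K * sqrt (v - 1))"
        using False by (simp_all add: algebra_simps)
      ultimately show ?thesis by linarith
    qed (simp add: conf_width_def)
    moreover have "v + 1 \<noteq> 0" using v_nat by linarith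
    ultimately show ?thesis using IH 2 unfolding lhs total by simp
  qed
qed simp

lemma sum_conf_width_le:
  fixes a :: "nat \<Rightarrow> real"
  assumes "\<And>t. t \<in> {1..N} \<Longrightarrow> a t = 0 \<or> a t = 1" and "0 \<le> K"
  shows "(\<Sum>t=1..N. a t * conf_width K (\<Sum>\<tau>\<in>{1..<t}. a \<tau>)) \<le> K * (1 + 4 * sqrt (\<Sum>\<tau>=1..N. a \<tau>))"
proof -
  have "(if (\<Sum>\<tau>=1..N. a \<tau>) = 0 then 0 else 1 + 4 * sqrt ((\<Sum>\<tau>=1..N. a \<tau>) - 1))
      \<le> 1 + 4 * sqrt (\<Sum>\<tau>=1..N. a \<tau>)"
    using assms(1) by (auto intro!: sum_nonneg)
  then show ?thesis
    using sum_conf_width_le_aux[OF assms] assms(2) by (meson mult_left_mono order_trans)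
qed

lemma sum_sqrt_le:
  fixes f :: "'a \<Rightarrow> real"
  assumes "\<And>k. k \<in> A \<Longrightarrow> 0 \<le> f k"
  shows "(\<Sum>k\<in>A. sqrt (f k)) \<le> sqrt (real (card A) * (\<Sum>k\<in>A. f k))"
proof (rule real_le_rsqrt)
  have "(\<Sum>k\<in>A. sqrt (f k) * 1)\<^sup>2 \<le> (\<Sum>k\<in>A. (sqrt (f k))\<^sup>2) * (\<Sum>k\<in>A. 1\<^sup>2)"
    by (rule Cauchy_Schwarz_ineq_sum)
  then show "(\<Sum>k\<in>A. sqrt (f k))\<^sup>2 \<le> real (card A) * (\<Sum>k\<in>A. f k)"
    using assms by (simp add: mult.commute)
qed

lemma borel_measurable_vec_nth[measurable (raw)]:
  "f \<in> borel_measurable N \<Longrightarrow> (\<lambda>\<omega>. (f \<omega> :: real^'n::finite) $ k) \<in> borel_measurable N"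
  by (rule measurable_compose[OF _ borel_measurable_nth])

lemma borel_measurable_vec_lambda:
  fixes f :: "'n::finite \<Rightarrow> 'a \<Rightarrow> real"
  assumes "\<And>k. f k \<in> borel_measurable M"
  shows "(\<lambda>\<omega>. (\<chi> k. f k \<omega>) :: real^'n) \<in> borel_measurable M"
proof (subst borel_measurable_euclidean_space, intro ballI)
  fix i :: "real^'n" assume "i \<in> Basis"
  then obtain j where "i = axis j 1" by (auto simp: Basis_vec_def)
  then show "(\<lambda>x. (\<chi> k. f k x) \<bullet> i) \<in> borel_measurable M"
    using assms by (simp add: inner_axis)
qed

lemma measurable_sigma_borel:
  assumes "G \<subseteq> Pow \<Omega>" "\<And>B. B \<in> sets borel \<Longrightarrow> f -` B \<inter> \<Omega> \<in> G"
  shows "f \<in> measurable (sigma \<Omega> G) (borel :: 'b::topological_space measure)"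
proof (rule measurableI)
  fix B :: "'b set" assume "B \<in> sets borel"
  then show "f -` B \<inter> space (sigma \<Omega> G) \<in> sets (sigma \<Omega> G)" using assms by auto
qed simp

lemma (in prob_space) indep_set_nn_integral_mult:
  fixes F G :: "'a \<Rightarrow> real"
  assumes ind: "indep_set A B"
    and A: "A = sigma_sets (space M) GA" and B: "B = sigma_sets (space M) GB"
    and F: "F \<in> borel_measurable M" "\<And>S. S \<in> sets borel \<Longrightarrow> F -` S \<inter> space M \<in> B"
    and G: "G \<in> borel_measurable M" "\<And>S. S \<in> sets borel \<Longrightarrow> G -` S \<inter> space M \<in> A"
  shows "(\<integral>\<^sup>+\<omega>. ennreal (F \<omega>) * ennreal (G \<omega>) \<partial>M) = (\<integral>\<^sup>+\<omega>. ennreal (F \<omega>) \<partial>M) * (\<integral>\<^sup>+\<omega>. ennreal (G \<omega>) \<partial>M)"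
proof -
  have sG: "sigma_sets (space M) {G -` S \<inter> space M | S. S \<in> sets borel} \<subseteq> A"
    unfolding A by (rule sigma_sets_mono) (use G(2) A in auto)
  have sF: "sigma_sets (space M) {F -` S \<inter> space M | S. S \<in> sets borel} \<subseteq> B"
    unfolding B by (rule sigma_sets_mono) (use F(2) B in auto)
  have "indep_set (sigma_sets (space M) {G -` S \<inter> space M | S. S \<in> sets borel})
                  (sigma_sets (space M) {F -` S \<inter> space M | S. S \<in> sets borel})"
    unfolding indep_set_def
    by (rule indep_sets_mono_sets[OF ind[unfolded indep_set_def]]) (use sG sF in \<open>auto split: bool.split\<close>)
  then have "indep_var borel G borel F"
    using F(1) G(1) by (simp add: indep_var_eq)
  then have "indep_var borel (ennreal \<circ> G) borel (ennreal \<circ> F)"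
    by (rule indep_var_compose) measurable
  moreover have "(\<lambda>_::bool. borel) = case_bool borel borel"
    by (rule ext) (simp split: bool.split)
  ultimately have "indep_vars (\<lambda>_. borel) (case_bool (ennreal \<circ> G) (ennreal \<circ> F)) UNIV"
    unfolding indep_var_def by metis
  then have "(\<integral>\<^sup>+\<omega>. (\<Prod>i\<in>UNIV. case_bool (ennreal \<circ> G) (ennreal \<circ> F) i \<omega>) \<partial>M)
       = (\<Prod>i\<in>UNIV. \<integral>\<^sup>+\<omega>. case_bool (ennreal \<circ> G) (ennreal \<circ> F) i \<omega> \<partial>M)"
    by (intro indep_vars_nn_integral) auto
  then show ?thesis
    by (simp add: UNIV_bool mult.commute comp_def)
qed

lemma (in prob_space) integrable_bounded:
  assumes "f \<in> borel_measurable M" "\<And>\<omega>. \<omega> \<in> space M \<Longrightarrow> \<bar>f \<omega>\<bar> \<le> B"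
  shows "integrable M (f :: 'a \<Rightarrow> real)"
  using assms by (intro integrable_const_bound[where B=B]) auto

locale ucb_regret = prob_space M
  for M :: "'a measure" +
  fixes m r T :: nat and C :: real and E :: "real^'n::finite"
    and W \<alpha> x :: "nat \<Rightarrow> 'a \<Rightarrow> real^'n" and L \<beta> D :: real
  assumes n2: "CARD('n) \<ge> 2" and r_pos: "0 < r" and r_lt: "r < CARD('n)"
    and C_pos: "C > 0" and T_pos: "T > 0"
    and L_eq: "L = ln (2 * real CARD('n) * real r * C * real T ^ 3 * (real T + 1))"
    and C_le: "C \<le> sqrt (2 * L)"
    and D_eq: "D = C + 2 * sqrt (2 * L)"
    and \<beta>_eq: "\<beta> = 1 / (D * sqrt (real T))"
    and E_range: "\<forall>k. 0 \<le> E $ k \<and> E $ k \<le> C"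
    and W_meas: "\<forall>t\<in>{1..T}. W t \<in> borel_measurable M"
    and W_subg: "\<forall>t\<in>{1..T}. \<forall>k. \<forall>l::real. integrable M (\<lambda>\<omega>. exp (l * (W t \<omega> $ k - E $ k)))
                    \<and> (\<integral>\<omega>. exp (l * (W t \<omega> $ k - E $ k)) \<partial>M) \<le> exp (l ^ 2 / 2)"
    and x_argmin: "\<forall>t\<in>{1..T}. \<forall>\<omega>\<in>space M. x t \<omega> \<in> Jset (m - 1) r \<and>
        (\<forall>y\<in>Jset (m - 1) r. fval (Etil L \<alpha> W t \<omega>) (ucb_p r L \<beta> x \<alpha> W t \<omega>) (x t \<omega>)
                          \<le> fval (Etil L \<alpha> W t \<omega>) (ucb_p r L \<beta> x \<alpha> W t \<omega>) y)"
    and x_hist: "\<forall>t\<in>{1..T}. x t \<in> Hsig M \<alpha> W t \<rightarrow>\<^sub>M borel"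
    and \<alpha>_meas: "\<forall>t\<in>{1..T}. \<alpha> t \<in> borel_measurable M"
    and \<alpha>_J1: "\<forall>t\<in>{1..T}. \<forall>\<omega>\<in>space M. \<alpha> t \<omega> \<in> Jset 1 r"
    and \<alpha>_cond: "\<forall>t\<in>{1..T}. \<forall>k. \<forall>A\<in>sets (Hsig M \<alpha> W t).
        measure M ({\<omega>\<in>space M. \<alpha> t \<omega> $ k = 1} \<inter> A)
          = (\<integral>\<omega>. ucb_p r L \<beta> x \<alpha> W t \<omega> $ k * indicator A \<omega> \<partial>M)"
    and W_indep_hist: "\<forall>t\<in>{1..T}. indep_set
        (sigma_sets (space M) {W t -` B \<inter> space M | B. B \<in> sets borel}) (HAsig M \<alpha> W t)"
begin

abbreviation "p t \<omega> \<equiv> ucb_p r L \<beta> x \<alpha> W t \<omega>"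

abbreviation "rad \<equiv> sqrt (2 * L)"

lemma \<alpha>_01: "t \<in> {1..T} \<Longrightarrow> \<omega> \<in> space M \<Longrightarrow> \<alpha> t \<omega> $ k = 0 \<or> \<alpha> t \<omega> $ k = 1"
  using \<alpha>_J1 Jset_1_cases by blast

lemma rad_pos: "0 < rad"
  using C_le C_pos by linarith

lemma L_pos: "0 < L"
  using rad_pos by simp

lemma D_pos: "0 < D"
  using D_eq C_pos rad_pos by linarith

subsection \<open>Measurability with respect to the history\<close>

lemma \<alpha>_measurable[measurable]: "t \<in> {1..T} \<Longrightarrow> \<alpha> t \<in> borel_measurable M"
  using \<alpha>_meas by blast

lemma W_measurable[measurable]: "t \<in> {1..T} \<Longrightarrow> W t \<in> borel_measurable M"
  using W_meas by blast

lemma obs_measurable: "t \<in> {1..T} \<Longrightarrow> obs \<alpha> W t \<in> borel_measurable M"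
  unfolding obs_def by (intro borel_measurable_vec_lambda) measurable

lemma Hgen_Pow: "Hgen M \<alpha> W t \<subseteq> Pow (space M)"
  unfolding Hgen_def by auto

lemma Hgen_sets: "t \<le> T + 1 \<Longrightarrow> Hgen M \<alpha> W t \<subseteq> sets M"
proof
  fix A assume t: "t \<le> T + 1" and "A \<in> Hgen M \<alpha> W t"
  then obtain \<tau> B where \<tau>: "\<tau> \<in> {1..<t}" and "B \<in> sets borel"
    and "A = \<alpha> \<tau> -` B \<inter> space M \<or> A = obs \<alpha> W \<tau> -` B \<inter> space M"
    unfolding Hgen_def by blast
  moreover have "\<tau> \<in> {1..T}" using \<tau> t by auto
  ultimately show "A \<in> sets M" using obs_measurable \<alpha>_measurable measurable_sets by metis
qed

lemma space_Hsig: "space (Hsig M \<alpha> W t) = space M"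
  unfolding Hsig_def using Hgen_Pow by simp

lemma subalgebra_Hsig:
  assumes "t \<le> T + 1"
  shows "subalgebra M (Hsig M \<alpha> W t)"
proof -
  have "sets (Hsig M \<alpha> W t) = sigma_sets (space M) (Hgen M \<alpha> W t)"
    unfolding Hsig_def using Hgen_Pow by simp
  then show ?thesis
    using sets.sigma_sets_subset[OF Hgen_sets[OF assms]] by (simp add: subalgebra_def space_Hsig)
qed

lemma \<alpha>_Hsig_measurable: "\<tau> \<in> {1..<t} \<Longrightarrow> \<alpha> \<tau> \<in> measurable (Hsig M \<alpha> W t) borel"
  unfolding Hsig_def by (rule measurable_sigma_borel[OF Hgen_Pow]) (unfold Hgen_def, blast)

lemma x_measurable[measurable]: "t \<in> {1..T} \<Longrightarrow> x t \<in> borel_measurable M"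
proof -
  assume t: "t \<in> {1..T}"
  then have "subalgebra M (Hsig M \<alpha> W t)" by (intro subalgebra_Hsig) auto
  with t x_hist show ?thesis using measurable_from_subalg by blast
qed

definition hist_act :: "nat \<Rightarrow> 'a measure" where
  "hist_act t = sigma (space M) (Hgen M \<alpha> W t \<union> {\<alpha> t -` B \<inter> space M | B. B \<in> sets borel})"

lemma hist_act_gen_Pow: "Hgen M \<alpha> W t \<union> {\<alpha> t -` B \<inter> space M | B. B \<in> sets borel} \<subseteq> Pow (space M)"
  using Hgen_Pow by auto

lemma sets_hist_act: "sets (hist_act t) = HAsig M \<alpha> W t"
  unfolding hist_act_def HAsig_def using hist_act_gen_Pow by simp

lemma space_hist_act: "space (hist_act t) = space M"
  unfolding hist_act_def using hist_act_gen_Pow by simp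

lemma \<alpha>_hist_act_measurable:
  assumes "\<tau> \<in> {1..t}"
  shows "\<alpha> \<tau> \<in> measurable (hist_act t) borel"
  unfolding hist_act_def
proof (rule measurable_sigma_borel[OF hist_act_gen_Pow])
  fix B :: "(real^'n) set" assume B: "B \<in> sets borel"
  show "\<alpha> \<tau> -` B \<inter> space M \<in> Hgen M \<alpha> W t \<union> {\<alpha> t -` B \<inter> space M | B. B \<in> sets borel}"
  proof (cases "\<tau> = t")
    case False
    then have "\<tau> \<in> {1..<t}" using assms by auto
    then have "\<alpha> \<tau> -` B \<inter> space M \<in> Hgen M \<alpha> W t" unfolding Hgen_def using B by blast
    then show ?thesis by blast
  qed (use B in blast)
qed

lemma obs_hist_act_measurable: "\<tau> \<in> {1..<t} \<Longrightarrow> obs \<alpha> W \<tau> \<in> measurable (hist_act t) borel"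
  unfolding hist_act_def
  by (rule measurable_sigma_borel[OF hist_act_gen_Pow]) (unfold Hgen_def, blast)

lemma ncount_measurable[measurable]:
  assumes "t \<le> T + 1"
  shows "(\<lambda>\<omega>. ncount \<alpha> t \<omega> k) \<in> borel_measurable M"
proof -
  have [measurable]: "\<And>\<tau>. \<tau> \<in> {1..<t} \<Longrightarrow> \<alpha> \<tau> \<in> borel_measurable M" using assms by auto
  show ?thesis unfolding ncount_def by measurable
qed

lemma ncount_Hsig_measurable: "(\<lambda>\<omega>. ncount \<alpha> t \<omega> k) \<in> borel_measurable (Hsig M \<alpha> W t)"
proof -
  have [measurable]: "\<And>\<tau>. \<tau> \<in> {1..<t} \<Longrightarrow> \<alpha> \<tau> \<in> borel_measurable (Hsig M \<alpha> W t)"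
    using \<alpha>_Hsig_measurable by auto
  show ?thesis unfolding ncount_def by measurable
qed

lemma Etil_measurable:
  assumes "t \<le> T + 1"
  shows "Etil L \<alpha> W t \<in> borel_measurable M"
proof -
  have [measurable]: "\<And>\<tau>. \<tau> \<in> {1..<t} \<Longrightarrow> \<alpha> \<tau> \<in> borel_measurable M"
    "\<And>\<tau>. \<tau> \<in> {1..<t} \<Longrightarrow> W \<tau> \<in> borel_measurable M" using assms by auto
  have "(\<lambda>\<omega>. Ebar \<alpha> W t \<omega> $ k + sqrt (2 * L / max 1 (ncount \<alpha> t \<omega> k))) \<in> borel_measurable M" for k
    unfolding Ebar_def ncount_def by simp measurable
  then show ?thesis unfolding Etil_def[abs_def] by (rule borel_measurable_vec_lambda)
qed

lemma Iset_ne: "Iset r \<noteq> ({} :: (real^'n) set)"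
  using uniform_in_Iset[of r, where 'n='n] r_lt by auto

lemma ucb_q_Iset: "ucb_q r L \<beta> x \<alpha> W s \<omega> \<in> Iset r"
proof (cases s)
  case 0
  then show ?thesis using uniform_in_Iset[of r, where 'n='n] r_lt by simp
next
  case (Suc s')
  then show ?thesis using closest_point_in_set[OF closed_Iset Iset_ne] by (simp add: projI_def)
qed

lemma p_Iset: "p t \<omega> \<in> Iset r"
  unfolding ucb_p_def by (rule ucb_q_Iset)

lemma projI_measurable: "projI r \<in> borel_measurable (borel :: (real^'n) measure)"
  unfolding projI_def[abs_def]
  by (intro borel_measurable_continuous_onI continuous_on_closest_point convex_Iset closed_Iset Iset_ne)

lemma ucb_q_measurable: "s < T \<Longrightarrow> (\<lambda>\<omega>. ucb_q r L \<beta> x \<alpha> W s \<omega>) \<in> borel_measurable M"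
proof (induction s)
  case 0
  then show ?case by simp
next
  case (Suc s)
  have [measurable]: "x (Suc s) \<in> borel_measurable M" "Etil L \<alpha> W (Suc s) \<in> borel_measurable M"
    "(\<lambda>\<omega>. ucb_q r L \<beta> x \<alpha> W s \<omega>) \<in> borel_measurable M"
    using Suc by (auto intro: Etil_measurable)
  have "(\<lambda>\<omega>. (\<chi> k. Etil L \<alpha> W (Suc s) \<omega> $ k / (1 + x (Suc s) \<omega> $ k)) :: real^'n) \<in> borel_measurable M"
    by (intro borel_measurable_vec_lambda) measurable
  then show ?case by (simp add: measurable_compose[OF _ projI_measurable])
qed

lemma p_measurable[measurable]: "t \<in> {1..T} \<Longrightarrow> p t \<in> borel_measurable M"
  unfolding ucb_p_def using ucb_q_measurable[of "t - 1"] by auto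

lemma Jset_ne: "Jset (m - 1) r \<noteq> ({} :: (real^'n) set)"
proof -
  obtain \<omega> where "\<omega> \<in> space M" using not_empty by blast
  then show ?thesis using x_argmin T_pos by fastforce
qed

lemma fworst_bounds:
  assumes "q \<in> Iset r"
  shows "0 \<le> fworst m r E q" "fworst m r E q \<le> C * real r"
proof -
  obtain y where y: "y \<in> Jset (m - 1) r" "fworst m r E q = fval E q y"
    using fworst_attained[OF Jset_ne] by blast
  show "0 \<le> fworst m r E q"
    using E_range Iset_bounds(1)[OF assms] Jset_nonneg[OF y(1)] y(2) by (simp add: fval_nonneg)
  show "fworst m r E q \<le> C * real r"
    using E_range assms Jset_nonneg[OF y(1)] y(2) by (simp add: fval_le)
qed

lemma fworst_p_integrable:
  assumes "t \<in> {1..T}"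
  shows "integrable M (\<lambda>\<omega>. fworst m r E (p t \<omega>))"
proof (rule integrable_bounded[where B="C * real r"])
  have [measurable]: "p t \<in> borel_measurable M" using assms by simp
  show "(\<lambda>\<omega>. fworst m r E (p t \<omega>)) \<in> borel_measurable M"
    unfolding fworst_def fval_def using finite_Jset by measurable
  show "\<bar>fworst m r E (p t \<omega>)\<bar> \<le> C * real r" for \<omega>
    using fworst_bounds[OF p_Iset] by (simp add: abs_le_iff order_trans[of _ 0])
qed

lemma fmaximin_le: "fmaximin m r E \<le> C * real r"
  unfolding fmaximin_def using Iset_ne fworst_bounds(2) by (intro cSUP_least) auto

lemma ncount_eq_card:
  assumes "t \<le> T + 1" "\<omega> \<in> space M"
  shows "ncount \<alpha> t \<omega> k = real (card {\<tau>\<in>{1..<t}. \<alpha> \<tau> \<omega> $ k = 1})"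
  unfolding ncount_def using assms \<alpha>_01 by (intro sum_01_eq_card) auto

lemma ncount_nat:
  assumes "1 \<le> t" "t \<le> T + 1" "\<omega> \<in> space M"
  obtains j where "j < t" "ncount \<alpha> t \<omega> k = real j"
proof -
  have "card {\<tau>\<in>{1..<t}. \<alpha> \<tau> \<omega> $ k = 1} \<le> card {1..<t}"
    by (intro card_mono) auto
  then show ?thesis using that ncount_eq_card[OF assms(2,3)] assms(1) by fastforce
qed

lemma ncount_nonneg: "t \<le> T + 1 \<Longrightarrow> \<omega> \<in> space M \<Longrightarrow> 0 \<le> ncount \<alpha> t \<omega> k"
  using ncount_eq_card by simp

lemma integral_p_mult_indicator:
  assumes t: "t \<in> {1..T}" and A: "A \<in> sets (Hsig M \<alpha> W t)"
  shows "(\<integral>\<omega>. p t \<omega> $ k * indicator A \<omega> \<partial>M) = (\<integral>\<omega>. \<alpha> t \<omega> $ k * indicator A \<omega> \<partial>M)"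
proof -
  have "A \<in> sets M" using subalgebra_Hsig[of t] A t by (auto simp: subalgebra_def)
  then have [measurable]: "{\<omega>\<in>space M. \<alpha> t \<omega> $ k = 1} \<inter> A \<in> sets M" using t by measurable
  have "(\<integral>\<omega>. p t \<omega> $ k * indicator A \<omega> \<partial>M) = measure M ({\<omega>\<in>space M. \<alpha> t \<omega> $ k = 1} \<inter> A)"
    using \<alpha>_cond t A by auto
  also have "\<dots> = (\<integral>\<omega>. indicator ({\<omega>\<in>space M. \<alpha> t \<omega> $ k = 1} \<inter> A) \<omega> \<partial>M)"
    by simp
  also have "\<dots> = (\<integral>\<omega>. \<alpha> t \<omega> $ k * indicator A \<omega> \<partial>M)"
  proof (intro Bochner_Integration.integral_cong refl)
    fix \<omega> assume "\<omega> \<in> space M"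
    then show "indicator ({\<omega>\<in>space M. \<alpha> t \<omega> $ k = 1} \<inter> A) \<omega> = \<alpha> t \<omega> $ k * indicator A \<omega>"
      using \<alpha>_01[OF t, of \<omega> k] by (auto simp: indicator_def)
  qed
  finally show ?thesis .
qed

text \<open>Since \<open>n_k[t]\<close> is determined by the history, \<open>\<alpha>_cond\<close> lets us replace the action \<open>\<alpha>_k[t]\<close>
  by its conditional probability \<open>p_k[t]\<close> under any function of \<open>n_k[t]\<close>.\<close>

lemma integral_ncount_fun_mult_p:
  assumes t: "t \<in> {1..T}"
  shows "(\<integral>\<omega>. g (ncount \<alpha> t \<omega> k) * p t \<omega> $ k \<partial>M) = (\<integral>\<omega>. g (ncount \<alpha> t \<omega> k) * \<alpha> t \<omega> $ k \<partial>M)"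
proof -
  define A where "A j = {\<omega> \<in> space M. ncount \<alpha> t \<omega> k = real j}" for j :: nat
  have [measurable]: "p t \<in> borel_measurable M" "\<alpha> t \<in> borel_measurable M"
    "(\<lambda>\<omega>. ncount \<alpha> t \<omega> k) \<in> borel_measurable M" using t by auto
  have A_Hsig: "A j \<in> sets (Hsig M \<alpha> W t)" for j
  proof -
    have [measurable]: "(\<lambda>\<omega>. ncount \<alpha> t \<omega> k) \<in> borel_measurable (Hsig M \<alpha> W t)"
      by (rule ncount_Hsig_measurable)
    have "{\<omega> \<in> space (Hsig M \<alpha> W t). ncount \<alpha> t \<omega> k = real j} \<in> sets (Hsig M \<alpha> W t)" by measurable
    then show ?thesis unfolding A_def space_Hsig .
  qed
  have [measurable]: "A j \<in> sets M" for j unfolding A_def by measurable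
  have decomp: "g (ncount \<alpha> t \<omega> k) * h \<omega> = (\<Sum>j<t. g (real j) * (h \<omega> * indicator (A j) \<omega>))"
    if \<omega>: "\<omega> \<in> space M" for \<omega> :: 'a and h :: "'a \<Rightarrow> real"
  proof -
    obtain j0 where j0: "j0 < t" "ncount \<alpha> t \<omega> k = real j0"
      using ncount_nat[of t \<omega> k] t \<omega> by auto
    have "(\<Sum>j<t. g (real j) * (h \<omega> * indicator (A j) \<omega>)) = (\<Sum>j\<in>{j0}. g (real j) * (h \<omega> * indicator (A j) \<omega>))"
      using j0 \<omega> by (intro sum.mono_neutral_right) (auto simp: A_def)
    then show ?thesis using j0 \<omega> by (simp add: A_def)
  qed
  have p_int: "integrable M (\<lambda>\<omega>. p t \<omega> $ k * indicator (A j) \<omega>)" for j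
    using Iset_bounds(1,2)[OF p_Iset] by (intro integrable_bounded[where B=1]) (auto simp: indicator_def)
  have \<alpha>_int: "integrable M (\<lambda>\<omega>. \<alpha> t \<omega> $ k * indicator (A j) \<omega>)" for j
  proof (rule integrable_bounded[where B=1])
    fix \<omega> assume "\<omega> \<in> space M"
    then have "\<alpha> t \<omega> $ k = 0 \<or> \<alpha> t \<omega> $ k = 1" using \<alpha>_01 t by blast
    then show "\<bar>\<alpha> t \<omega> $ k * indicator (A j) \<omega>\<bar> \<le> 1" by (auto simp: indicator_def)
  qed measurable
  have "(\<integral>\<omega>. g (ncount \<alpha> t \<omega> k) * p t \<omega> $ k \<partial>M)
      = (\<integral>\<omega>. (\<Sum>j<t. g (real j) * (p t \<omega> $ k * indicator (A j) \<omega>)) \<partial>M)"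
    using decomp[of _ "\<lambda>\<omega>. p t \<omega> $ k"] by (intro Bochner_Integration.integral_cong) auto
  also have "\<dots> = (\<Sum>j<t. g (real j) * (\<integral>\<omega>. \<alpha> t \<omega> $ k * indicator (A j) \<omega> \<partial>M))"
    using p_int A_Hsig by (simp add: integral_sum integral_p_mult_indicator[OF t])
  also have "\<dots> = (\<integral>\<omega>. (\<Sum>j<t. g (real j) * (\<alpha> t \<omega> $ k * indicator (A j) \<omega>)) \<partial>M)"
    using \<alpha>_int by (simp add: integral_sum)
  also have "\<dots> = (\<integral>\<omega>. g (ncount \<alpha> t \<omega> k) * \<alpha> t \<omega> $ k \<partial>M)"
    using decomp[of _ "\<lambda>\<omega>. \<alpha> t \<omega> $ k"] by (intro Bochner_Integration.integral_cong) auto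
  finally show ?thesis .
qed

subsection \<open>Concentration of the observed rewards\<close>

definition dev_sum :: "'n \<Rightarrow> nat \<Rightarrow> 'a \<Rightarrow> real" where
  "dev_sum k t \<omega> = (\<Sum>\<tau>\<in>{1..<t}. \<alpha> \<tau> \<omega> $ k * (W \<tau> \<omega> $ k - E $ k))"

definition exp_mart :: "real \<Rightarrow> 'n \<Rightarrow> nat \<Rightarrow> 'a \<Rightarrow> real" where
  "exp_mart l k t \<omega> = exp (l * dev_sum k t \<omega> - l\<^sup>2 / 2 * ncount \<alpha> t \<omega> k)"

lemma dev_sum_measurable[measurable]: "t \<le> T + 1 \<Longrightarrow> dev_sum k t \<in> borel_measurable M"
proof -
  assume t: "t \<le> T + 1"
  have [measurable]: "\<And>\<tau>. \<tau> \<in> {1..<t} \<Longrightarrow> \<alpha> \<tau> \<in> borel_measurable M"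
    "\<And>\<tau>. \<tau> \<in> {1..<t} \<Longrightarrow> W \<tau> \<in> borel_measurable M" using t by auto
  show ?thesis unfolding dev_sum_def[abs_def] by measurable
qed

lemma exp_mart_measurable[measurable]: "t \<le> T + 1 \<Longrightarrow> exp_mart l k t \<in> borel_measurable M"
  unfolding exp_mart_def[abs_def] by measurable

lemma exp_mart_Suc:
  assumes t: "t \<in> {1..T}" and \<omega>: "\<omega> \<in> space M"
  shows "exp_mart l k (Suc t) \<omega> = exp_mart l k t \<omega> * (1 - \<alpha> t \<omega> $ k)
    + exp (- l\<^sup>2 / 2) * (exp_mart l k t \<omega> * \<alpha> t \<omega> $ k) * exp (l * (W t \<omega> $ k - E $ k))"
proof -
  have S: "dev_sum k (Suc t) \<omega> = dev_sum k t \<omega> + \<alpha> t \<omega> $ k * (W t \<omega> $ k - E $ k)"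
    and N: "ncount \<alpha> (Suc t) \<omega> k = ncount \<alpha> t \<omega> k + \<alpha> t \<omega> $ k"
    using t by (simp_all add: dev_sum_def ncount_def)
  consider "\<alpha> t \<omega> $ k = 0" | "\<alpha> t \<omega> $ k = 1" using \<alpha>_01 t \<omega> by blast
  then show ?thesis
  proof cases
    case 1
    then show ?thesis by (simp add: exp_mart_def S N)
  next
    case 2
    then show ?thesis by (simp add: exp_mart_def S N mult_exp_exp algebra_simps)
  qed
qed

text \<open>Where \<open>\<alpha>_k[\<tau>] = 1\<close> the reward \<open>W_k[\<tau>]\<close> is observed, so the factor \<open>\<alpha>_k[t]\<close> turns
  \<open>exp_mart\<close> into a function of the observations and actions.\<close>

lemma exp_mart_mult_\<alpha>_HAsig:
  assumes t: "t \<in> {1..T}" and S: "S \<in> sets borel"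
  shows "(\<lambda>\<omega>. exp_mart l k t \<omega> * \<alpha> t \<omega> $ k) -` S \<inter> space M \<in> HAsig M \<alpha> W t"
proof -
  define F where "F \<omega> = exp (l * (\<Sum>\<tau>\<in>{1..<t}. \<alpha> \<tau> \<omega> $ k * (obs \<alpha> W \<tau> \<omega> $ k - E $ k))
      - l\<^sup>2 / 2 * (\<Sum>\<tau>\<in>{1..<t}. \<alpha> \<tau> \<omega> $ k)) * \<alpha> t \<omega> $ k" for \<omega>
  have [measurable]: "\<And>\<tau>. \<tau> \<in> {1..<t} \<Longrightarrow> \<alpha> \<tau> \<in> borel_measurable (hist_act t)"
    "\<And>\<tau>. \<tau> \<in> {1..<t} \<Longrightarrow> obs \<alpha> W \<tau> \<in> borel_measurable (hist_act t)"
    "\<alpha> t \<in> borel_measurable (hist_act t)"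
    using \<alpha>_hist_act_measurable obs_hist_act_measurable t by auto
  have "F \<in> borel_measurable (hist_act t)" unfolding F_def by measurable
  moreover have "exp_mart l k t \<omega> * \<alpha> t \<omega> $ k = F \<omega>" if "\<omega> \<in> space M" for \<omega>
  proof -
    have "dev_sum k t \<omega> = (\<Sum>\<tau>\<in>{1..<t}. \<alpha> \<tau> \<omega> $ k * (obs \<alpha> W \<tau> \<omega> $ k - E $ k))"
      unfolding dev_sum_def using \<alpha>_01 \<open>\<omega> \<in> space M\<close> t
      by (intro sum.cong) (auto simp: obs_def, fastforce)
    then show ?thesis unfolding exp_mart_def F_def ncount_def by simp
  qed
  ultimately have "(\<lambda>\<omega>. exp_mart l k t \<omega> * \<alpha> t \<omega> $ k) -` S \<inter> space M \<in> sets (hist_act t)"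
    using S measurable_sets[of F "hist_act t" borel S] space_hist_act
    by (metis (no_types, lifting) vimage_inter_cong)
  then show ?thesis using sets_hist_act by simp
qed

lemma exp_increment_preimage:
  assumes "S \<in> sets borel"
  shows "(\<lambda>\<omega>. exp (l * (W t \<omega> $ k - E $ k))) -` S \<inter> space M
    \<in> sigma_sets (space M) {W t -` B \<inter> space M | B. B \<in> sets borel}"
proof -
  define h where "h v = exp (l * ((v::real^'n) $ k - E $ k))" for v
  have "h \<in> borel_measurable borel" unfolding h_def by measurable
  then have "h -` S \<in> sets borel" using measurable_sets[OF _ assms, of h borel] by simp
  moreover have "(\<lambda>\<omega>. exp (l * (W t \<omega> $ k - E $ k))) -` S \<inter> space M = W t -` (h -` S) \<inter> space M"
    by (auto simp: h_def)
  ultimately show ?thesis by blast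
qed

lemma nn_integral_exp_mart_mult_increment:
  assumes t: "t \<in> {1..T}"
  shows "(\<integral>\<^sup>+\<omega>. ennreal (exp_mart l k t \<omega> * \<alpha> t \<omega> $ k) * ennreal (exp (l * (W t \<omega> $ k - E $ k))) \<partial>M)
    = (\<integral>\<^sup>+\<omega>. ennreal (exp_mart l k t \<omega> * \<alpha> t \<omega> $ k) \<partial>M) * (\<integral>\<^sup>+\<omega>. ennreal (exp (l * (W t \<omega> $ k - E $ k))) \<partial>M)"
proof (rule indep_set_nn_integral_mult[OF _ refl])
  show "indep_set (sigma_sets (space M) {W t -` B \<inter> space M | B. B \<in> sets borel}) (HAsig M \<alpha> W t)"
    using W_indep_hist t by blast
  show "HAsig M \<alpha> W t = sigma_sets (space M) (Hgen M \<alpha> W t \<union> {\<alpha> t -` B \<inter> space M | B. B \<in> sets borel})"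
    by (simp add: HAsig_def)
  show "\<And>S. S \<in> sets borel \<Longrightarrow> (\<lambda>\<omega>. exp_mart l k t \<omega> * \<alpha> t \<omega> $ k) -` S \<inter> space M \<in> HAsig M \<alpha> W t"
    using exp_mart_mult_\<alpha>_HAsig t by blast
  show "\<And>S. S \<in> sets borel \<Longrightarrow> (\<lambda>\<omega>. exp (l * (W t \<omega> $ k - E $ k))) -` S \<inter> space M
      \<in> sigma_sets (space M) {W t -` B \<inter> space M | B. B \<in> sets borel}"
    by (rule exp_increment_preimage)
  have [measurable]: "\<alpha> t \<in> borel_measurable M" "W t \<in> borel_measurable M" "exp_mart l k t \<in> borel_measurable M"
    using t by auto
  show "(\<lambda>\<omega>. exp_mart l k t \<omega> * \<alpha> t \<omega> $ k) \<in> borel_measurable M" by measurable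
  show "(\<lambda>\<omega>. exp (l * (W t \<omega> $ k - E $ k))) \<in> borel_measurable M" by measurable
qed

lemma nn_integral_exp_increment_le:
  assumes t: "t \<in> {1..T}"
  shows "(\<integral>\<^sup>+\<omega>. ennreal (exp (l * (W t \<omega> $ k - E $ k))) \<partial>M) \<le> ennreal (exp (l\<^sup>2 / 2))"
proof -
  have int: "integrable M (\<lambda>\<omega>. exp (l * (W t \<omega> $ k - E $ k)))"
    and "(\<integral>\<omega>. exp (l * (W t \<omega> $ k - E $ k)) \<partial>M) \<le> exp (l\<^sup>2 / 2)"
    using W_subg t by auto
  moreover have "(\<integral>\<^sup>+\<omega>. ennreal (exp (l * (W t \<omega> $ k - E $ k))) \<partial>M)
      = ennreal (\<integral>\<omega>. exp (l * (W t \<omega> $ k - E $ k)) \<partial>M)"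
    using int by (intro nn_integral_eq_integral) auto
  ultimately show ?thesis by (simp add: ennreal_leI)
qed

text \<open>Independence of \<open>W[t]\<close> from the history and the current action makes \<open>exp_mart l k\<close> a
  nonnegative supermartingale; we only need its expectation bound.\<close>

lemma nn_integral_exp_mart_Suc_le:
  assumes t: "t \<in> {1..T}"
  shows "(\<integral>\<^sup>+\<omega>. ennreal (exp_mart l k (Suc t) \<omega>) \<partial>M) \<le> (\<integral>\<^sup>+\<omega>. ennreal (exp_mart l k t \<omega>) \<partial>M)"
proof -
  define F where "F \<omega> = exp_mart l k t \<omega> * \<alpha> t \<omega> $ k" for \<omega>
  define G where "G \<omega> = exp (l * (W t \<omega> $ k - E $ k))" for \<omega>
  define H where "H \<omega> = exp_mart l k t \<omega> * (1 - \<alpha> t \<omega> $ k)" for \<omega>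
  have [measurable]: "F \<in> borel_measurable M" "G \<in> borel_measurable M" "H \<in> borel_measurable M"
    using t unfolding F_def G_def H_def by auto
  have nonneg: "0 \<le> F \<omega>" "0 \<le> H \<omega>" if "\<omega> \<in> space M" for \<omega>
    using \<alpha>_01[OF t that, of k] by (auto simp: F_def H_def exp_mart_def)
  have indep: "(\<integral>\<^sup>+\<omega>. ennreal (F \<omega>) * ennreal (G \<omega>) \<partial>M)
      = (\<integral>\<^sup>+\<omega>. ennreal (F \<omega>) \<partial>M) * (\<integral>\<^sup>+\<omega>. ennreal (G \<omega>) \<partial>M)"
    unfolding F_def G_def by (rule nn_integral_exp_mart_mult_increment[OF t])
  have subg: "(\<integral>\<^sup>+\<omega>. ennreal (G \<omega>) \<partial>M) \<le> ennreal (exp (l\<^sup>2 / 2))"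
    unfolding G_def by (rule nn_integral_exp_increment_le[OF t])
  have "(\<integral>\<^sup>+\<omega>. ennreal (exp_mart l k (Suc t) \<omega>) \<partial>M)
      = (\<integral>\<^sup>+\<omega>. ennreal (H \<omega>) + ennreal (exp (- l\<^sup>2 / 2)) * (ennreal (F \<omega>) * ennreal (G \<omega>)) \<partial>M)"
  proof (intro nn_integral_cong)
    fix \<omega> assume \<omega>: "\<omega> \<in> space M"
    have "exp_mart l k (Suc t) \<omega> = H \<omega> + exp (- l\<^sup>2 / 2) * (F \<omega> * G \<omega>)"
      using exp_mart_Suc[OF t \<omega>] by (simp add: F_def G_def H_def mult.assoc)
    moreover have "0 \<le> exp (- l\<^sup>2 / 2) * (F \<omega> * G \<omega>)" using nonneg[OF \<omega>] by (simp add: G_def)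
    ultimately show "ennreal (exp_mart l k (Suc t) \<omega>)
        = ennreal (H \<omega>) + ennreal (exp (- l\<^sup>2 / 2)) * (ennreal (F \<omega>) * ennreal (G \<omega>))"
      using nonneg[OF \<omega>] by (simp add: ennreal_plus ennreal_mult' G_def)
  qed
  also have "\<dots> = (\<integral>\<^sup>+\<omega>. ennreal (H \<omega>) \<partial>M)
      + ennreal (exp (- l\<^sup>2 / 2)) * ((\<integral>\<^sup>+\<omega>. ennreal (F \<omega>) \<partial>M) * (\<integral>\<^sup>+\<omega>. ennreal (G \<omega>) \<partial>M))"
    by (simp add: nn_integral_add nn_integral_cmult indep)
  also have "\<dots> \<le> (\<integral>\<^sup>+\<omega>. ennreal (H \<omega>) \<partial>M)
      + ennreal (exp (- l\<^sup>2 / 2)) * ((\<integral>\<^sup>+\<omega>. ennreal (F \<omega>) \<partial>M) * ennreal (exp (l\<^sup>2 / 2)))"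
    by (intro add_mono order_refl mult_left_mono subg) auto
  also have "\<dots> = (\<integral>\<^sup>+\<omega>. ennreal (H \<omega>) + ennreal (F \<omega>) \<partial>M)"
    by (simp add: nn_integral_add ennreal_mult'[symmetric] exp_add[symmetric] mult.left_commute)
  also have "\<dots> = (\<integral>\<^sup>+\<omega>. ennreal (exp_mart l k t \<omega>) \<partial>M)"
    using nonneg by (intro nn_integral_cong) (simp add: F_def H_def ennreal_plus[symmetric] algebra_simps)
  finally show ?thesis .
qed

lemma nn_integral_exp_mart_le_1:
  "t \<le> T + 1 \<Longrightarrow> (\<integral>\<^sup>+\<omega>. ennreal (exp_mart l k t \<omega>) \<partial>M) \<le> 1"
proof (induction t)
  case 0
  then show ?case by (simp add: exp_mart_def dev_sum_def ncount_def emeasure_space_1)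
next
  case (Suc t)
  show ?case
  proof (cases "t = 0")
    case True
    then show ?thesis by (simp add: exp_mart_def dev_sum_def ncount_def emeasure_space_1)
  next
    case False
    then have "t \<in> {1..T}" using Suc.prems by auto
    then have "(\<integral>\<^sup>+\<omega>. ennreal (exp_mart l k (Suc t) \<omega>) \<partial>M) \<le> (\<integral>\<^sup>+\<omega>. ennreal (exp_mart l k t \<omega>) \<partial>M)"
      by (rule nn_integral_exp_mart_Suc_le)
    also have "\<dots> \<le> 1" using Suc by simp
    finally show ?thesis .
  qed
qed

text \<open>Chernoff bound through \<open>exp_mart\<close>; \<open>\<sigma> = \<plusminus>1\<close> selects the tail.\<close>

lemma prob_dev_sum_ge:
  assumes t: "t \<in> {1..T}" and s: "0 < s" and a: "0 \<le> a" and \<sigma>: "\<sigma>\<^sup>2 = 1"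
  shows "measure M {\<omega>\<in>space M. ncount \<alpha> t \<omega> k = s \<and> a \<le> \<sigma> * dev_sum k t \<omega>} \<le> exp (- (a\<^sup>2) / (2 * s))"
proof -
  define A where "A = {\<omega>\<in>space M. ncount \<alpha> t \<omega> k = s \<and> a \<le> \<sigma> * dev_sum k t \<omega>}"
  define l where "l = \<sigma> * a / s"
  define c where "c = exp (- (a\<^sup>2) / (2 * s))"
  have [measurable]: "A \<in> sets M" "exp_mart l k t \<in> borel_measurable M"
    using t unfolding A_def by auto
  have ind: "indicator A \<omega> \<le> ennreal (exp_mart l k t \<omega>) * ennreal c" for \<omega>
  proof (cases "\<omega> \<in> A")
    case True
    then have n: "ncount \<alpha> t \<omega> k = s" and S: "a \<le> \<sigma> * dev_sum k t \<omega>" by (auto simp: A_def)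
    have "(a / s) * a \<le> (a / s) * (\<sigma> * dev_sum k t \<omega>)" using S a s by (intro mult_left_mono) auto
    then have lin: "a * a / s \<le> l * dev_sum k t \<omega>" by (simp add: l_def mult.commute mult.left_commute)
    have "l\<^sup>2 = a\<^sup>2 / s\<^sup>2" unfolding l_def using \<sigma> by (simp add: power_divide power_mult_distrib)
    then have "l\<^sup>2 / 2 * ncount \<alpha> t \<omega> k = a\<^sup>2 / (2 * s)"
      using s unfolding n by (simp add: power2_eq_square field_simps)
    then have "a\<^sup>2 / (2 * s) \<le> l * dev_sum k t \<omega> - l\<^sup>2 / 2 * ncount \<alpha> t \<omega> k"
      using lin s by (simp add: power2_eq_square field_simps)
    then have "1 \<le> exp_mart l k t \<omega> * c"
      unfolding exp_mart_def c_def by (simp add: exp_add[symmetric])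
    then have "ennreal 1 \<le> ennreal (exp_mart l k t \<omega> * c)" by (rule ennreal_leI)
    then show ?thesis using True by (simp add: ennreal_mult'' c_def exp_mart_def)
  qed simp
  have "emeasure M A = (\<integral>\<^sup>+\<omega>. indicator A \<omega> \<partial>M)" by simp
  also have "\<dots> \<le> (\<integral>\<^sup>+\<omega>. ennreal (exp_mart l k t \<omega>) * ennreal c \<partial>M)"
    using ind by (intro nn_integral_mono) auto
  also have "\<dots> = (\<integral>\<^sup>+\<omega>. ennreal (exp_mart l k t \<omega>) \<partial>M) * ennreal c"
    by (simp add: nn_integral_multc)
  also have "\<dots> \<le> 1 * ennreal c"
    using nn_integral_exp_mart_le_1[of t l k] t by (intro mult_right_mono) auto
  finally show ?thesis unfolding A_def c_def by (simp add: emeasure_eq_measure)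
qed

subsection \<open>Regret on the good event\<close>

definition good :: "'a \<Rightarrow> bool" where
  "good \<omega> \<longleftrightarrow> (\<forall>t\<in>{1..T}. \<forall>k. ncount \<alpha> t \<omega> k \<noteq> 0 \<longrightarrow> \<bar>dev_sum k t \<omega>\<bar> \<le> sqrt (2 * L * ncount \<alpha> t \<omega> k))"

lemma Etil_eq:
  "Etil L \<alpha> W t \<omega> $ k = (dev_sum k t \<omega> + ncount \<alpha> t \<omega> k * E $ k) / max 1 (ncount \<alpha> t \<omega> k)
    + sqrt (2 * L / max 1 (ncount \<alpha> t \<omega> k))"
proof -
  have "(\<Sum>\<tau>\<in>{1..<t}. \<alpha> \<tau> \<omega> $ k * W \<tau> \<omega> $ k) = dev_sum k t \<omega> + ncount \<alpha> t \<omega> k * E $ k"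
    unfolding dev_sum_def ncount_def by (simp add: algebra_simps sum.distrib sum_distrib_left sum_subtractf)
  then show ?thesis unfolding Etil_def Ebar_def by simp
qed

lemma Etil_unobserved:
  assumes t: "t \<in> {1..T}" and \<omega>: "\<omega> \<in> space M" and n: "ncount \<alpha> t \<omega> k = 0"
  shows "Etil L \<alpha> W t \<omega> $ k = rad"
proof -
  have "0 \<le> \<alpha> \<tau> \<omega> $ k" if "\<tau> \<in> {1..<t}" for \<tau>
    using \<alpha>_01[of \<tau> \<omega> k] that t \<omega> by force
  then have "\<forall>\<tau>\<in>{1..<t}. \<alpha> \<tau> \<omega> $ k = 0"
    using n sum_nonneg_eq_0_iff[of "{1..<t}" "\<lambda>\<tau>. \<alpha> \<tau> \<omega> $ k"] by (simp add: ncount_def)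
  then have "dev_sum k t \<omega> = 0" by (simp add: dev_sum_def)
  then show ?thesis using n by (simp add: Etil_eq)
qed

lemma Etil_observed:
  assumes t: "t \<in> {1..T}" and \<omega>: "\<omega> \<in> space M" and n: "ncount \<alpha> t \<omega> k \<noteq> 0"
  shows "1 \<le> ncount \<alpha> t \<omega> k"
    and "Etil L \<alpha> W t \<omega> $ k - E $ k = dev_sum k t \<omega> / ncount \<alpha> t \<omega> k + rad / sqrt (ncount \<alpha> t \<omega> k)"
proof -
  obtain j where "ncount \<alpha> t \<omega> k = real j" using ncount_nat[of t \<omega> k] t \<omega> by auto
  then show n1: "1 \<le> ncount \<alpha> t \<omega> k" using n by simp
  then show "Etil L \<alpha> W t \<omega> $ k - E $ k = dev_sum k t \<omega> / ncount \<alpha> t \<omega> k + rad / sqrt (ncount \<alpha> t \<omega> k)"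
    by (simp add: Etil_eq real_sqrt_divide field_simps)
qed

lemma Etil_bounds:
  assumes t: "t \<in> {1..T}" and \<omega>: "\<omega> \<in> space M" and good: "good \<omega>"
  shows "E $ k \<le> Etil L \<alpha> W t \<omega> $ k"
    and "Etil L \<alpha> W t \<omega> $ k - E $ k \<le> conf_width rad (ncount \<alpha> t \<omega> k)"
    and "Etil L \<alpha> W t \<omega> $ k \<le> D"
proof -
  define n where "n = ncount \<alpha> t \<omega> k"
  have E: "0 \<le> E $ k" "E $ k \<le> C" using E_range by auto
  have "E $ k \<le> Etil L \<alpha> W t \<omega> $ k \<and> Etil L \<alpha> W t \<omega> $ k - E $ k \<le> conf_width rad n
    \<and> Etil L \<alpha> W t \<omega> $ k \<le> D"
  proof (cases "n = 0")
    case True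
    then show ?thesis
      using Etil_unobserved[OF t \<omega>] E C_le rad_pos D_eq by (simp add: conf_width_def n_def)
  next
    case False
    then have n1: "1 \<le> n" and Et: "Etil L \<alpha> W t \<omega> $ k - E $ k = dev_sum k t \<omega> / n + rad / sqrt n"
      using Etil_observed[OF t \<omega>] by (auto simp: n_def)
    have "\<bar>dev_sum k t \<omega>\<bar> / n \<le> sqrt (2 * L * n) / n"
      using good t False n1 by (intro divide_right_mono) (auto simp: good_def n_def)
    also have "\<dots> = rad / sqrt n"
      using n1 by (simp add: real_sqrt_mult field_simps)
    finally have "\<bar>dev_sum k t \<omega> / n\<bar> \<le> rad / sqrt n" using n1 by simp
    moreover have "rad / sqrt n \<le> rad"
      using n1 rad_pos by (simp add: divide_le_eq)
    moreover have "conf_width rad n = 2 * (rad / sqrt n)" using False by (simp add: conf_width_def)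
    ultimately show ?thesis using Et E D_eq by (simp only: abs_le_iff) linarith
  qed
  then show "E $ k \<le> Etil L \<alpha> W t \<omega> $ k" "Etil L \<alpha> W t \<omega> $ k - E $ k \<le> conf_width rad (ncount \<alpha> t \<omega> k)"
    "Etil L \<alpha> W t \<omega> $ k \<le> D" by (auto simp: n_def)
qed

definition grad :: "nat \<Rightarrow> 'a \<Rightarrow> real^'n" where
  "grad t \<omega> = (\<chi> k. Etil L \<alpha> W t \<omega> $ k / (1 + x t \<omega> $ k))"

text \<open>Per-slot regret against \<open>q\<close>: optimism turns it into a linear term, handled by gradient
  ascent, plus the confidence widths weighted by \<open>p[t]\<close>.\<close>

lemma fworst_gap_le:
  assumes t: "t \<in> {1..T}" and \<omega>: "\<omega> \<in> space M" and good: "good \<omega>" and q: "q \<in> Iset r"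
  shows "fworst m r E q - fworst m r E (p t \<omega>)
    \<le> grad t \<omega> \<bullet> (q - p t \<omega>) + (\<Sum>k\<in>UNIV. conf_width rad (ncount \<alpha> t \<omega> k) * p t \<omega> $ k)"
proof -
  let ?e = "Etil L \<alpha> W t \<omega>"
  have xt: "x t \<omega> \<in> Jset (m - 1) r"
    and xmin: "\<And>y. y \<in> Jset (m - 1) r \<Longrightarrow> fval ?e (p t \<omega>) (x t \<omega>) \<le> fval ?e (p t \<omega>) y"
    using x_argmin t \<omega> by auto
  obtain y where y: "y \<in> Jset (m - 1) r" "fworst m r E (p t \<omega>) = fval E (p t \<omega>) y"
    using fworst_attained[OF Jset_ne] by blast
  have "fworst m r E q \<le> fval ?e q (x t \<omega>)"
    using fworst_le[OF xt] Etil_bounds(1)[OF t \<omega> good] Iset_bounds(1)[OF q] Jset_nonneg[OF xt]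
    by (meson fval_mono_weights order_trans)
  moreover have "fval ?e q (x t \<omega>) - fval ?e (p t \<omega>) (x t \<omega>) = grad t \<omega> \<bullet> (q - p t \<omega>)"
    unfolding fval_diff_eq_inner grad_def ..
  moreover have "fval ?e (p t \<omega>) y - fval E (p t \<omega>) y
      \<le> (\<Sum>k\<in>UNIV. conf_width rad (ncount \<alpha> t \<omega> k) * p t \<omega> $ k)"
    using Etil_bounds[OF t \<omega> good] Iset_bounds(1)[OF p_Iset] Jset_nonneg[OF y(1)]
    by (intro fval_diff_le[where c="\<chi> k. conf_width rad (ncount \<alpha> t \<omega> k)", simplified]) auto
  ultimately show ?thesis using xmin[OF y(1)] y(2) by linarith
qed

lemma norm_grad_le:
  assumes t: "t \<in> {1..T}" and \<omega>: "\<omega> \<in> space M" and good: "good \<omega>"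
  shows "(norm (grad t \<omega>))\<^sup>2 \<le> real CARD('n) * D\<^sup>2"
proof -
  have xt: "x t \<omega> \<in> Jset (m - 1) r" using x_argmin t \<omega> by auto
  have "(grad t \<omega> $ k)\<^sup>2 \<le> D\<^sup>2" for k
  proof -
    have e0: "0 \<le> Etil L \<alpha> W t \<omega> $ k"
      using Etil_bounds(1)[OF t \<omega> good, of k] E_range by (meson order_trans)
    then have "grad t \<omega> $ k \<le> Etil L \<alpha> W t \<omega> $ k" "0 \<le> grad t \<omega> $ k"
      using Jset_nonneg[OF xt, of k] by (simp_all add: grad_def divide_one_plus_le)
    then show ?thesis using Etil_bounds(3)[OF t \<omega> good, of k] by (simp add: power_mono)
  qed
  then have "(\<Sum>k\<in>UNIV. (grad t \<omega> $ k)\<^sup>2) \<le> (\<Sum>k\<in>(UNIV::'n set). D\<^sup>2)" by (intro sum_mono)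
  then show ?thesis unfolding power2_norm_vec by simp
qed

lemma sum_grad_inner_le:
  assumes \<omega>: "\<omega> \<in> space M" and good: "good \<omega>" and q: "q \<in> Iset r"
  shows "(\<Sum>t=1..T. grad t \<omega> \<bullet> (q - p t \<omega>)) \<le> 5 / 8 * real CARD('n) * D * sqrt (real T)"
proof -
  define P where "P s = ucb_q r L \<beta> x \<alpha> W s \<omega>" for s
  have \<beta>_pos: "0 < \<beta>" using D_pos T_pos by (simp add: \<beta>_eq)
  have p_eq: "p t \<omega> = P (t - 1)" for t by (simp add: ucb_p_def P_def)
  have "2 * \<beta> * (\<Sum>t=1..T. grad t \<omega> \<bullet> (q - P (t - 1)))
         \<le> (norm (P 0 - q))\<^sup>2 - (norm (P T - q))\<^sup>2 + \<beta>\<^sup>2 * (\<Sum>t=1..T. (norm (grad t \<omega>))\<^sup>2)"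
    by (rule closest_point_ascent_regret[OF convex_Iset closed_Iset q]) (simp add: P_def grad_def projI_def)
  also have "\<dots> \<le> real CARD('n) / 4 + \<beta>\<^sup>2 * (real T * (real CARD('n) * D\<^sup>2))"
  proof -
    have "(norm (P 0 - q))\<^sup>2 \<le> real CARD('n) / 4" unfolding P_def using dist_uniform_Iset_le[OF q] by simp
    moreover have "(\<Sum>t=1..T. (norm (grad t \<omega>))\<^sup>2) \<le> (\<Sum>t=1..T. real CARD('n) * D\<^sup>2)"
      using norm_grad_le[OF _ \<omega> good] by (intro sum_mono) auto
    then have "\<beta>\<^sup>2 * (\<Sum>t=1..T. (norm (grad t \<omega>))\<^sup>2) \<le> \<beta>\<^sup>2 * (real T * (real CARD('n) * D\<^sup>2))"
      by (intro mult_left_mono) simp_all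
    ultimately show ?thesis by (smt (verit) zero_le_power2)
  qed
  finally have "(\<Sum>t=1..T. grad t \<omega> \<bullet> (q - p t \<omega>))
      \<le> (real CARD('n) / 4 + \<beta>\<^sup>2 * (real T * (real CARD('n) * D\<^sup>2))) / (2 * \<beta>)"
    using \<beta>_pos by (simp add: p_eq le_divide_eq mult.commute)
  also have "\<dots> = 5 / 8 * real CARD('n) * D * sqrt (real T)"
  proof -
    have "real T = sqrt (real T) * sqrt (real T)" by simp
    then show ?thesis using D_pos T_pos unfolding \<beta>_eq by (simp add: field_simps power2_eq_square)
  qed
  finally show ?thesis .
qed

lemma good_regret_le:
  assumes \<omega>: "\<omega> \<in> space M" and good: "good \<omega>" and q: "q \<in> Iset r"
  shows "(\<Sum>t=1..T. fworst m r E q - fworst m r E (p t \<omega>))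
    \<le> 5 / 8 * real CARD('n) * D * sqrt (real T)
      + (\<Sum>t=1..T. \<Sum>k\<in>UNIV. conf_width rad (ncount \<alpha> t \<omega> k) * p t \<omega> $ k)"
proof -
  have "(\<Sum>t=1..T. fworst m r E q - fworst m r E (p t \<omega>))
      \<le> (\<Sum>t=1..T. grad t \<omega> \<bullet> (q - p t \<omega>) + (\<Sum>k\<in>UNIV. conf_width rad (ncount \<alpha> t \<omega> k) * p t \<omega> $ k))"
    using fworst_gap_le[OF _ \<omega> good q] by (intro sum_mono) auto
  then show ?thesis using sum_grad_inner_le[OF \<omega> good q] by (simp add: sum.distrib)
qed

subsection \<open>Pathwise regret\<close>

definition bad_event :: "real \<Rightarrow> 'n \<Rightarrow> nat \<Rightarrow> nat \<Rightarrow> 'a set" where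
  "bad_event \<sigma> k t s =
    {\<omega>\<in>space M. ncount \<alpha> t \<omega> k = real s \<and> sqrt (2 * L * real s) \<le> \<sigma> * dev_sum k t \<omega>}"

definition bad_count :: "'a \<Rightarrow> real" where
  "bad_count \<omega> = (\<Sum>k\<in>UNIV. \<Sum>t\<in>{1..T}. \<Sum>s\<in>{1..<t}.
      indicator (bad_event 1 k t s) \<omega> + indicator (bad_event (-1) k t s) \<omega>)"

lemma bad_count_nonneg: "0 \<le> bad_count \<omega>"
  unfolding bad_count_def by (intro sum_nonneg) auto

lemma bad_count_ge_1:
  assumes \<omega>: "\<omega> \<in> space M" and not_good: "\<not> good \<omega>"
  shows "1 \<le> bad_count \<omega>"
proof -
  define I where "I k t s = indicator (bad_event 1 k t s) \<omega> + (indicator (bad_event (-1) k t s) \<omega> :: real)"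
    for k t s
  obtain t k where t: "t \<in> {1..T}" and n0: "ncount \<alpha> t \<omega> k \<noteq> 0"
    and dev: "sqrt (2 * L * ncount \<alpha> t \<omega> k) < \<bar>dev_sum k t \<omega>\<bar>"
    using not_good by (auto simp: good_def not_le)
  obtain j where j: "j < t" "ncount \<alpha> t \<omega> k = real j" using ncount_nat[of t \<omega> k] t \<omega> by auto
  have "\<omega> \<in> bad_event 1 k t j \<or> \<omega> \<in> bad_event (-1) k t j"
    using dev j \<omega> by (cases "0 \<le> dev_sum k t \<omega>") (auto simp: bad_event_def)
  then have "1 \<le> I k t j" by (auto simp: I_def indicator_def)
  also have "\<dots> \<le> (\<Sum>s\<in>{1..<t}. I k t s)"
    using j n0 by (intro member_le_sum) (auto simp: I_def)
  also have "\<dots> \<le> (\<Sum>t\<in>{1..T}. \<Sum>s\<in>{1..<t}. I k t s)"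
    using t by (intro member_le_sum[of t _ "\<lambda>t. \<Sum>s\<in>{1..<t}. I k t s"] sum_nonneg) (auto simp: I_def)
  also have "\<dots> \<le> bad_count \<omega>"
    unfolding bad_count_def I_def[symmetric]
    by (intro member_le_sum[of k _ "\<lambda>k. \<Sum>t\<in>{1..T}. \<Sum>s\<in>{1..<t}. I k t s"] sum_nonneg) (auto simp: I_def)
  finally show ?thesis .
qed

lemma sum_conf_width_p_nonneg:
  assumes "\<omega> \<in> space M"
  shows "0 \<le> (\<Sum>t=1..T. \<Sum>k\<in>UNIV. conf_width rad (ncount \<alpha> t \<omega> k) * p t \<omega> $ k)"
  using assms rad_pos ncount_nonneg Iset_bounds(1)[OF p_Iset]
  by (intro sum_nonneg mult_nonneg_nonneg) (auto simp: conf_width_def)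

text \<open>Off the good event the regret \<open>T \<cdot> fmaximin \<le> T C r\<close> is paid by \<open>bad_count \<ge> 1\<close>.\<close>

lemma pathwise_regret_le:
  assumes \<omega>: "\<omega> \<in> space M"
  shows "real T * fmaximin m r E - (\<Sum>t=1..T. fworst m r E (p t \<omega>))
    \<le> 5 / 8 * real CARD('n) * D * sqrt (real T)
      + (\<Sum>t=1..T. \<Sum>k\<in>UNIV. conf_width rad (ncount \<alpha> t \<omega> k) * p t \<omega> $ k)
      + real T * C * real r * bad_count \<omega>"
proof (cases "good \<omega>")
  case True
  define B where "B = 5 / 8 * real CARD('n) * D * sqrt (real T)
      + (\<Sum>t=1..T. \<Sum>k\<in>UNIV. conf_width rad (ncount \<alpha> t \<omega> k) * p t \<omega> $ k)"
  have "fmaximin m r E \<le> (B + (\<Sum>t=1..T. fworst m r E (p t \<omega>))) / real T"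
    unfolding fmaximin_def
  proof (rule cSUP_least[OF Iset_ne])
    fix q :: "real^'n" assume q: "q \<in> Iset r"
    have "real T * fworst m r E q - (\<Sum>t=1..T. fworst m r E (p t \<omega>)) \<le> B"
      using good_regret_le[OF \<omega> True q] by (simp add: B_def sum_subtractf)
    then show "fworst m r E q \<le> (B + (\<Sum>t=1..T. fworst m r E (p t \<omega>))) / real T"
      using T_pos by (simp add: le_divide_eq mult.commute)
  qed
  then have "real T * fmaximin m r E - (\<Sum>t=1..T. fworst m r E (p t \<omega>)) \<le> B"
    using T_pos by (simp add: le_divide_eq mult.commute)
  moreover have "0 \<le> real T * C * real r * bad_count \<omega>" using C_pos bad_count_nonneg by simp
  ultimately show ?thesis unfolding B_def by linarith
next
  case False
  have "real T * fmaximin m r E \<le> real T * C * real r * 1"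
    using mult_left_mono[OF fmaximin_le, of "real T"] by (simp add: mult.assoc)
  also have "\<dots> \<le> real T * C * real r * bad_count \<omega>"
    using bad_count_ge_1[OF \<omega> False] C_pos by (intro mult_left_mono) auto
  moreover have "0 \<le> (\<Sum>t=1..T. fworst m r E (p t \<omega>))"
    using fworst_bounds(1)[OF p_Iset] by (intro sum_nonneg) auto
  moreover have "0 \<le> 5 / 8 * real CARD('n) * D * sqrt (real T)" using D_pos by simp
  ultimately show ?thesis using sum_conf_width_p_nonneg[OF \<omega>] by linarith
qed

subsection \<open>Expected confidence widths\<close>

lemma conf_width_bounds:
  assumes "t \<in> {1..T}" "\<omega> \<in> space M"
  shows "0 \<le> conf_width rad (ncount \<alpha> t \<omega> k)" "conf_width rad (ncount \<alpha> t \<omega> k) \<le> 2 * rad"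
proof -
  obtain j where j: "ncount \<alpha> t \<omega> k = real j" using ncount_nat[of t \<omega> k] assms by auto
  show "0 \<le> conf_width rad (ncount \<alpha> t \<omega> k)" using rad_pos j by (simp add: conf_width_def)
  have "2 * rad / sqrt (real j) \<le> 2 * rad" if "j \<noteq> 0"
    using that rad_pos by (simp add: divide_le_eq)
  then show "conf_width rad (ncount \<alpha> t \<omega> k) \<le> 2 * rad" using j rad_pos by (simp add: conf_width_def)
qed

lemma integrable_conf_width_mult:
  assumes t: "t \<in> {1..T}" and f: "f \<in> borel_measurable M" "\<And>\<omega>. \<omega> \<in> space M \<Longrightarrow> \<bar>f \<omega>\<bar> \<le> 1"
  shows "integrable M (\<lambda>\<omega>. conf_width rad (ncount \<alpha> t \<omega> k) * f \<omega>)"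
proof (rule integrable_bounded[where B="2 * rad"])
  have [measurable]: "(\<lambda>\<omega>. ncount \<alpha> t \<omega> k) \<in> borel_measurable M" "f \<in> borel_measurable M"
    using t f(1) by auto
  show "(\<lambda>\<omega>. conf_width rad (ncount \<alpha> t \<omega> k) * f \<omega>) \<in> borel_measurable M"
    unfolding conf_width_def by measurable
  fix \<omega> assume \<omega>: "\<omega> \<in> space M"
  have "\<bar>conf_width rad (ncount \<alpha> t \<omega> k)\<bar> * \<bar>f \<omega>\<bar> \<le> 2 * rad * 1"
    using conf_width_bounds[OF t \<omega>] f(2)[OF \<omega>] L_pos by (intro mult_mono) auto
  then show "\<bar>conf_width rad (ncount \<alpha> t \<omega> k) * f \<omega>\<bar> \<le> 2 * rad" by (simp add: abs_mult)
qed

lemma sum_conf_width_\<alpha>_le: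
  assumes \<omega>: "\<omega> \<in> space M"
  shows "(\<Sum>t=1..T. \<Sum>k\<in>UNIV. conf_width rad (ncount \<alpha> t \<omega> k) * \<alpha> t \<omega> $ k)
     \<le> real CARD('n) * rad + 4 * rad * sqrt (real CARD('n) * real r * real T)"
proof -
  define N where "N k = (\<Sum>\<tau>=1..T. \<alpha> \<tau> \<omega> $ k)" for k
  have a01: "\<And>t. t \<in> {1..T} \<Longrightarrow> \<alpha> t \<omega> $ k = 0 \<or> \<alpha> t \<omega> $ k = 1" for k using \<alpha>_01 \<omega> by blast
  have N_nonneg: "0 \<le> N k" for k unfolding N_def using a01[of _ k] by (intro sum_nonneg) fastforce
  have "(\<Sum>k\<in>UNIV. N k) = (\<Sum>\<tau>=1..T. \<Sum>k\<in>UNIV. \<alpha> \<tau> \<omega> $ k)"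
    unfolding N_def by (rule sum.swap)
  also have "\<dots> = (\<Sum>\<tau>=1..T. real r)"
  proof (intro sum.cong refl)
    fix \<tau> assume "\<tau> \<in> {1..T}"
    then have "\<alpha> \<tau> \<omega> \<in> Jset 1 r" using \<alpha>_J1 \<omega> by blast
    then show "(\<Sum>k\<in>UNIV. \<alpha> \<tau> \<omega> $ k) = real r" using sum_Jset by fastforce
  qed
  also have "\<dots> = real T * real r" by simp
  finally have N_sum: "(\<Sum>k\<in>UNIV. N k) = real T * real r" .
  have "(\<Sum>t=1..T. \<Sum>k\<in>UNIV. conf_width rad (ncount \<alpha> t \<omega> k) * \<alpha> t \<omega> $ k)
      = (\<Sum>k\<in>UNIV. \<Sum>t=1..T. \<alpha> t \<omega> $ k * conf_width rad (\<Sum>\<tau>\<in>{1..<t}. \<alpha> \<tau> \<omega> $ k))"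
    by (subst sum.swap) (simp add: ncount_def mult.commute)
  also have "\<dots> \<le> (\<Sum>k\<in>UNIV. rad * (1 + 4 * sqrt (N k)))"
    unfolding N_def using a01 rad_pos by (intro sum_mono sum_conf_width_le) auto
  also have "\<dots> = (\<Sum>k\<in>(UNIV::'n set). rad) + (\<Sum>k\<in>UNIV. (4 * rad) * sqrt (N k))"
    by (simp add: sum.distrib algebra_simps)
  also have "\<dots> = real CARD('n) * rad + 4 * rad * (\<Sum>k\<in>UNIV. sqrt (N k))"
    by (simp add: sum_distrib_left[symmetric])
  also have "\<dots> \<le> real CARD('n) * rad + 4 * rad * sqrt (real CARD('n) * real r * real T)"
    using sum_sqrt_le[of UNIV N] N_nonneg N_sum rad_pos by (simp add: algebra_simps)
  finally show ?thesis .
qed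

lemma integrable_conf_width_mult_p:
  "t \<in> {1..T} \<Longrightarrow> integrable M (\<lambda>\<omega>. conf_width rad (ncount \<alpha> t \<omega> k) * p t \<omega> $ k)"
  using Iset_bounds(1,2)[OF p_Iset] by (intro integrable_conf_width_mult) auto

lemma expected_conf_width_le:
  "(\<integral>\<omega>. (\<Sum>t=1..T. \<Sum>k\<in>UNIV. conf_width rad (ncount \<alpha> t \<omega> k) * p t \<omega> $ k) \<partial>M)
     \<le> real CARD('n) * rad + 4 * rad * sqrt (real CARD('n) * real r * real T)"
proof -
  have \<alpha>_int: "integrable M (\<lambda>\<omega>. conf_width rad (ncount \<alpha> t \<omega> k) * \<alpha> t \<omega> $ k)" if t: "t \<in> {1..T}" for t k
  proof (rule integrable_conf_width_mult[OF t])
    show "\<bar>\<alpha> t \<omega> $ k\<bar> \<le> 1" if "\<omega> \<in> space M" for \<omega>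
      using \<alpha>_01[OF t that, of k] by auto
  qed (use t in measurable)
  have "(\<integral>\<omega>. (\<Sum>t=1..T. \<Sum>k\<in>UNIV. conf_width rad (ncount \<alpha> t \<omega> k) * p t \<omega> $ k) \<partial>M)
      = (\<Sum>t=1..T. \<Sum>k\<in>UNIV. (\<integral>\<omega>. conf_width rad (ncount \<alpha> t \<omega> k) * p t \<omega> $ k \<partial>M))"
    using integrable_conf_width_mult_p by (simp add: integral_sum)
  also have "\<dots> = (\<Sum>t=1..T. \<Sum>k\<in>UNIV. (\<integral>\<omega>. conf_width rad (ncount \<alpha> t \<omega> k) * \<alpha> t \<omega> $ k \<partial>M))"
    using integral_ncount_fun_mult_p by (intro sum.cong refl) auto
  also have "\<dots> = (\<integral>\<omega>. (\<Sum>t=1..T. \<Sum>k\<in>UNIV. conf_width rad (ncount \<alpha> t \<omega> k) * \<alpha> t \<omega> $ k) \<partial>M)"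
    using \<alpha>_int by (simp add: integral_sum)
  also have "\<dots> \<le> (\<integral>\<omega>. real CARD('n) * rad + 4 * rad * sqrt (real CARD('n) * real r * real T) \<partial>M)"
    using \<alpha>_int sum_conf_width_\<alpha>_le by (intro integral_mono) auto
  finally show ?thesis by (simp add: prob_space)
qed

subsection \<open>Probability of the bad events\<close>

lemma bad_event_sets: "t \<le> T + 1 \<Longrightarrow> bad_event \<sigma> k t s \<in> sets M"
  unfolding bad_event_def by measurable

lemma measure_bad_event_le:
  assumes t: "t \<in> {1..T}" and s: "s \<in> {1..<t}" and \<sigma>: "\<sigma>\<^sup>2 = 1"
  shows "measure M (bad_event \<sigma> k t s) \<le> exp (- L)"
proof -
  have s0: "0 < real s" using s by simp
  have "measure M (bad_event \<sigma> k t s) \<le> exp (- ((sqrt (2 * L * real s))\<^sup>2) / (2 * real s))"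
    unfolding bad_event_def by (rule prob_dev_sum_ge[OF t s0 _ \<sigma>]) (use L_pos in simp)
  also have "\<dots> = exp (- L)" using s0 L_pos by simp
  finally show ?thesis .
qed

lemma expected_bad_count_le:
  "integrable M bad_count \<and> (\<integral>\<omega>. bad_count \<omega> \<partial>M) \<le> real CARD('n) * real T ^ 2 * (2 * exp (- L))"
proof -
  have ind: "integrable M (\<lambda>\<omega>. indicator (bad_event \<sigma> k t s) \<omega> :: real)" if "t \<in> {1..T}" for \<sigma> k t s
    using bad_event_sets[of t \<sigma> k s] that
    by (intro integrable_real_indicator) (auto simp: emeasure_eq_measure)
  have int_s: "integrable M (\<lambda>\<omega>. \<Sum>s\<in>{1..<t}. indicator (bad_event 1 k t s) \<omega>
      + indicator (bad_event (-1) k t s) \<omega> :: real)" if "t \<in> {1..T}" for k t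
    using ind that by auto
  have int_t: "integrable M (\<lambda>\<omega>. \<Sum>t\<in>{1..T}. \<Sum>s\<in>{1..<t}. indicator (bad_event 1 k t s) \<omega>
      + indicator (bad_event (-1) k t s) \<omega> :: real)" for k
    using int_s by auto
  have int: "integrable M bad_count" unfolding bad_count_def using int_t by auto
  have space: "measure M (bad_event \<sigma> k t s \<inter> space M) = measure M (bad_event \<sigma> k t s)" for \<sigma> k t s
    by (simp add: bad_event_def Int_absorb2)
  have "(\<integral>\<omega>. bad_count \<omega> \<partial>M) = (\<Sum>k\<in>UNIV. \<Sum>t\<in>{1..T}. \<Sum>s\<in>{1..<t}.
      measure M (bad_event 1 k t s) + measure M (bad_event (-1) k t s))"
    unfolding bad_count_def using ind int_s int_t by (simp add: integral_sum space)
  also have "\<dots> \<le> (\<Sum>k\<in>(UNIV::'n set). \<Sum>t\<in>{1..T}. \<Sum>s\<in>{1..<t}. 2 * exp (- L))"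
    using measure_bad_event_le by (intro sum_mono) (simp add: add_mono[of _ "exp (- L)" _ "exp (- L)", simplified])
  also have "\<dots> \<le> (\<Sum>k\<in>(UNIV::'n set). \<Sum>t\<in>{1..T}. real T * (2 * exp (- L)))"
    by (intro sum_mono) (auto intro!: mult_right_mono)
  also have "\<dots> = real CARD('n) * real T ^ 2 * (2 * exp (- L))"
    by (simp add: power2_eq_square)
  finally show ?thesis using int by simp
qed

text \<open>The choice \<open>L = log (2 n r C T\<^sup>3 (T + 1))\<close> makes the bad events too rare to matter.\<close>

lemma expected_bad_penalty_le_1:
  "real T * C * real r * (\<integral>\<omega>. bad_count \<omega> \<partial>M) \<le> 1"
proof -
  define A where "A = 2 * real CARD('n) * real r * C * real T ^ 3"
  have A_pos: "0 < A" using C_pos r_pos T_pos by (simp add: A_def)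
  have "exp L = A * (real T + 1)" using A_pos L_eq by (simp add: A_def)
  then have exp_L: "exp (- L) = 1 / (A * (real T + 1))" by (simp add: exp_minus inverse_eq_divide)
  have "real T * C * real r * (\<integral>\<omega>. bad_count \<omega> \<partial>M)
      \<le> real T * C * real r * (real CARD('n) * real T ^ 2 * (2 * exp (- L)))"
    using expected_bad_count_le C_pos by (intro mult_left_mono) auto
  also have "\<dots> = A * exp (- L)" by (simp add: A_def power2_eq_square power3_eq_cube algebra_simps)
  also have "\<dots> = 1 / (real T + 1)" using A_pos by (simp add: exp_L)
  also have "\<dots> \<le> 1" by simp
  finally show ?thesis .
qed

lemma expected_regret_le:
  "(\<Sum>t=1..T. fmaximin m r E - (\<integral>\<omega>. fworst m r E (p t \<omega>) \<partial>M))
   \<le> 5 / 8 * real CARD('n) * D * sqrt (real T)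
     + (real CARD('n) * rad + 4 * rad * sqrt (real CARD('n) * real r * real T)) + 1"
proof -
  define CW where "CW \<omega> = (\<Sum>t=1..T. \<Sum>k\<in>UNIV. conf_width rad (ncount \<alpha> t \<omega> k) * p t \<omega> $ k)" for \<omega>
  have fw_int: "integrable M (\<lambda>\<omega>. \<Sum>t=1..T. fworst m r E (p t \<omega>))"
    using fworst_p_integrable by auto
  have CW_int: "integrable M CW"
    unfolding CW_def using integrable_conf_width_mult_p by auto
  have bad_int: "integrable M bad_count" using expected_bad_count_le by simp
  have "(\<Sum>t=1..T. fmaximin m r E - (\<integral>\<omega>. fworst m r E (p t \<omega>) \<partial>M))
      = real T * fmaximin m r E - (\<Sum>t=1..T. (\<integral>\<omega>. fworst m r E (p t \<omega>) \<partial>M))"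
    by (simp add: sum_subtractf)
  also have "\<dots> = real T * fmaximin m r E - (\<integral>\<omega>. (\<Sum>t=1..T. fworst m r E (p t \<omega>)) \<partial>M)"
    using fworst_p_integrable by (simp add: integral_sum)
  also have "\<dots> = (\<integral>\<omega>. real T * fmaximin m r E - (\<Sum>t=1..T. fworst m r E (p t \<omega>)) \<partial>M)"
    using fw_int by (simp add: prob_space)
  also have "\<dots> \<le> (\<integral>\<omega>. 5 / 8 * real CARD('n) * D * sqrt (real T) + CW \<omega>
      + real T * C * real r * bad_count \<omega> \<partial>M)"
  proof (rule integral_mono)
    show "integrable M (\<lambda>\<omega>. real T * fmaximin m r E - (\<Sum>t=1..T. fworst m r E (p t \<omega>)))"
      using fw_int by simp
    show "integrable M (\<lambda>\<omega>. 5 / 8 * real CARD('n) * D * sqrt (real T) + CW \<omega>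
        + real T * C * real r * bad_count \<omega>)"
      using CW_int bad_int by simp
  qed (use pathwise_regret_le in \<open>simp add: CW_def\<close>)
  also have "\<dots> = 5 / 8 * real CARD('n) * D * sqrt (real T) + (\<integral>\<omega>. CW \<omega> \<partial>M)
      + real T * C * real r * (\<integral>\<omega>. bad_count \<omega> \<partial>M)"
    using CW_int bad_int by (simp add: prob_space)
  finally show ?thesis
    using expected_conf_width_le expected_bad_penalty_le_1 unfolding CW_def by linarith
qed

end

lemma regret_bound_arith:
  fixes n K C D s u :: real
  assumes n: "2 \<le> n" and K: "0 < K" and C: "0 < C" and D: "D = C + 2 * K"
    and s: "1 \<le> s" and u: "1 \<le> u"
  shows "5 / 8 * n * D * s + (n * K + 4 * K * (sqrt n * u)) + 1 \<le> n * D * s + 4 * n * (u * K) + 1"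
proof -
  define w where "w = sqrt n"
  have w0: "0 < w" and ww: "w * w = n" using n by (simp_all add: w_def)
  have "sqrt ((16/15)\<^sup>2) \<le> w" unfolding w_def using n by (intro real_sqrt_le_mono) (simp add: power2_eq_square)
  then have "16 / 15 \<le> w" by simp
  then have "16 * w \<le> 15 * (w * w)" using w0 by (simp add: mult_right_mono[of "16/15" w w, simplified] algebra_simps)
  then have wn: "w \<le> 15 / 16 * n" using ww by simp
  have "2 * K * 1 \<le> D * s" using D C s K by (intro mult_mono) auto
  then have a1: "3 / 4 * n * K \<le> 3 / 8 * n * D * s"
    using n by (simp add: mult_left_mono[of "2 * K" "D * s" "3/8 * n", simplified] algebra_simps)
  have "n / 16 \<le> n - w" using wn by simp
  also have "\<dots> \<le> u * (n - w)"
    using u wn n mult_right_mono[of 1 u "n - w"] by simp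
  finally have "4 * K * (n / 16) \<le> 4 * K * (u * (n - w))" using K by (intro mult_left_mono) auto
  moreover have "n * K = 3 / 4 * n * K + 4 * K * (n / 16)" by simp
  ultimately have "n * K \<le> 3 / 8 * n * D * s + 4 * K * (u * (n - w))" using a1 by linarith
  then show ?thesis by (simp add: w_def algebra_simps)
qed

theorem theorem2:
  fixes M :: "'a measure"
    and m r T :: nat and C :: real
    and E :: "real^'n"
    and W \<alpha> x :: "nat \<Rightarrow> 'a \<Rightarrow> real^'n"
    and \<delta> L D \<beta> :: real
  assumes "prob_space M"
    and n2: "CARD('n) \<ge> 2" and m2: "m \<ge> 2" and r_pos: "0 < r" and r_lt: "r < CARD('n)"
    and C_pos: "C > 0" and T_pos: "T > 0"
    and small: "1 / (2 * real CARD('n) * real r * C * real T ^ 2) < 1"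
    and Cbound: "sqrt (2 * ln (2 * real CARD('n) * real r * C * real T ^ 3 * (real T + 1))) \<ge> C"
    and E_range: "\<forall>k. 0 \<le> E $ k \<and> E $ k \<le> C"
    and W_indep: "prob_space.indep_vars M (\<lambda>_. borel) W {1..T}"
    and W_ident: "\<forall>t\<in>{1..T}. distr M borel (W t) = distr M borel (W 1)"
    and W_mean: "\<forall>t\<in>{1..T}. \<forall>k. integrable M (\<lambda>\<omega>. W t \<omega> $ k - E $ k)
                    \<and> (\<integral>\<omega>. (W t \<omega> $ k - E $ k) \<partial>M) = 0"
    and W_subg: "\<forall>t\<in>{1..T}. \<forall>k. \<forall>l::real. integrable M (\<lambda>\<omega>. exp (l * (W t \<omega> $ k - E $ k)))
                    \<and> (\<integral>\<omega>. exp (l * (W t \<omega> $ k - E $ k)) \<partial>M) \<le> exp (l ^ 2 / 2)"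
    defines "\<delta> \<equiv> 1 / (2 * real CARD('n) * real r * C * real T ^ 2)"
    and "L \<equiv> ln (real T * (real T + 1) / \<delta>)"
    and "D \<equiv> C + 2 * sqrt (2 * L)"
    and "\<beta> \<equiv> 1 / (D * sqrt (real T))"
  assumes x_argmin: "\<forall>t\<in>{1..T}. \<forall>\<omega>\<in>space M. x t \<omega> \<in> Jset (m - 1) r \<and>
        (\<forall>y\<in>Jset (m - 1) r. fval (Etil L \<alpha> W t \<omega>) (ucb_p r L \<beta> x \<alpha> W t \<omega>) (x t \<omega>)
                          \<le> fval (Etil L \<alpha> W t \<omega>) (ucb_p r L \<beta> x \<alpha> W t \<omega>) y)"
    and x_hist: "\<forall>t\<in>{1..T}. x t \<in> Hsig M \<alpha> W t \<rightarrow>\<^sub>M borel"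
    and \<alpha>_meas: "\<forall>t\<in>{1..T}. \<alpha> t \<in> borel_measurable M"
    and \<alpha>_J1: "\<forall>t\<in>{1..T}. \<forall>\<omega>\<in>space M. \<alpha> t \<omega> \<in> Jset 1 r"
    and \<alpha>_cond: "\<forall>t\<in>{1..T}. \<forall>k. \<forall>A\<in>sets (Hsig M \<alpha> W t).
        measure M ({\<omega>\<in>space M. \<alpha> t \<omega> $ k = 1} \<inter> A)
          = (\<integral>\<omega>. ucb_p r L \<beta> x \<alpha> W t \<omega> $ k * indicator A \<omega> \<partial>M)"
    and W_indep_hist: "\<forall>t\<in>{1..T}. prob_space.indep_set M
        (sigma_sets (space M) {W t -` B \<inter> space M | B. B \<in> sets borel}) (HAsig M \<alpha> W t)"
  shows "(\<Sum>t=1..T. fmaximin m r E - (\<integral>\<omega>. fworst m r E (ucb_p r L \<beta> x \<alpha> W t \<omega>) \<partial>M))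
         \<le> real CARD('n) * D * sqrt (real T)
           + 4 * real CARD('n) * sqrt (2 * real r * real T * ln (2 * real CARD('n) * real r * C * real T ^ 3 * (real T + 1)))
           + 1"
proof -
  interpret prob_space M by fact
  have L_eq: "L = ln (2 * real CARD('n) * real r * C * real T ^ 3 * (real T + 1))"
  proof -
    have "real T * (real T + 1) / \<delta> = 2 * real CARD('n) * real r * C * real T ^ 3 * (real T + 1)"
      unfolding assms(15) using C_pos by (simp add: power2_eq_square power3_eq_cube field_simps)
    then show ?thesis using assms(16) by simp
  qed
  have W_meas: "\<forall>t\<in>{1..T}. W t \<in> borel_measurable M"
    using W_indep unfolding indep_vars_def2 by auto
  interpret ucb_regret M m r T C E W \<alpha> x L \<beta> D
    by unfold_locales (use n2 r_pos r_lt C_pos T_pos L_eq Cbound assms(17,18) E_range W_meas W_subg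
        x_argmin x_hist \<alpha>_meas \<alpha>_J1 \<alpha>_cond W_indep_hist in auto)
  have "1 * 1 \<le> real r * real T" using r_pos T_pos by (intro mult_mono) auto
  then have rT: "1 \<le> sqrt (real r * real T)" by simp
  have "sqrt (real CARD('n) * real r * real T) = sqrt (real CARD('n)) * sqrt (real r * real T)"
    and "sqrt (2 * real r * real T * L) = sqrt (real r * real T) * rad"
    by (simp_all add: real_sqrt_mult[symmetric] algebra_simps)
  then have "5 / 8 * real CARD('n) * D * sqrt (real T)
        + (real CARD('n) * rad + 4 * rad * sqrt (real CARD('n) * real r * real T)) + 1
      \<le> real CARD('n) * D * sqrt (real T) + 4 * real CARD('n) * sqrt (2 * real r * real T * L) + 1"
    using regret_bound_arith[OF _ rad_pos C_pos D_eq _ rT] n2 T_pos by simp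
  then show ?thesis using expected_regret_le by (simp add: L_eq)
qed

end
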